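(* Let $-\infty<a<b<\infty$, let $f:[a,b]\times\mathbb{R}\times\mathbb{R}\to\mathbb{R}$, $(x,u,p)\mapsto f(x,u,p)$, be of class $C^3$, and let $\Phi(u)=\int_a^b f(x,u(x),u'(x))\,dx$ on $C^1([a,b])$. Let $u^0\in C^1([a,b])$ be an extremal (i.e. $\frac{d}{dx}f^0_p=f^0_u$ on $[a,b]$) satisfying $f^0_p(a)=f^0_p(b)=0$, and assume there is $c^0>0$ with $f^0_{pp}(x)\ge c^0$ for all $x\in[a,b]$. Let $h$ be a nontrivial solution of the Jacobi equation $\mathcal{A}h=0$ on $[a,b]$ with $\mathcal{B}h(a)=0$. (i) If $h(y)=0$ for some $y\in(a,b]$, or if $\mathcal{B}h(b)\,h(b)<0$, then $u^0$ is not a weak minimizer of $\Phi$ in $C^1([a,b])$. (ii) If $h(y)\neq0$ for all $y\in(a,b]$ and $\mathcal{B}h(b)\,h(b)>0$, then $u^0$ is a strict weak minimizer of $\Phi$ in $C^1([a,b])$.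
   Context: For a partial derivative $\mathfrak{f}$ of $f$ (e.g. $f_p,f_u,f_{pp},f_{pu},f_{up},f_{uu}$) write $\mathfrak{f}^0(x)=\mathfrak{f}(x,u^0(x),(u^0)'(x))$. For $h\in C^2([a,b])$ define $\mathcal{B}h=f^0_{pp}h'+f^0_{pu}h$, $\mathcal{C}h=f^0_{up}h'+f^0_{uu}h$ and $\mathcal{A}h=-\frac{d}{dx}(\mathcal{B}h)+\mathcal{C}h$; the Jacobi equation is $\mathcal{A}h=0$. No endpoint constraints are imposed. $u^0$ is a weak minimizer in $C^1([a,b])$ if there is $\varepsilon>0$ with $\Phi(v)\ge\Phi(u^0)$ for all $v\in C^1([a,b])$ with $\|v-u^0\|_{C^1}<\varepsilon$ (where $\|v\|_{C^1}=\max|v|+\max|v'|$); strict if $\Phi(v)>\Phi(u^0)$ for such $v\ne u^0$. *)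

theory Defs
  imports "HOL-Analysis.Analysis"
begin

definition D1 :: "(real \<Rightarrow> real \<Rightarrow> real \<Rightarrow> real) \<Rightarrow> real \<Rightarrow> real \<Rightarrow> real \<Rightarrow> real" where
  "D1 g = (\<lambda>x u p. deriv (\<lambda>t. g t u p) x)"
definition D2 :: "(real \<Rightarrow> real \<Rightarrow> real \<Rightarrow> real) \<Rightarrow> real \<Rightarrow> real \<Rightarrow> real \<Rightarrow> real" where
  "D2 g = (\<lambda>x u p. deriv (\<lambda>t. g x t p) u)"
definition D3 :: "(real \<Rightarrow> real \<Rightarrow> real \<Rightarrow> real) \<Rightarrow> real \<Rightarrow> real \<Rightarrow> real \<Rightarrow> real" where
  "D3 g = (\<lambda>x u p. deriv (\<lambda>t. g x u t) p)"

fun Ck_on :: "nat \<Rightarrow> (real \<times> real \<times> real) set \<Rightarrow> (real \<Rightarrow> real \<Rightarrow> real \<Rightarrow> real) \<Rightarrow> bool" where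
  "Ck_on 0 U g = continuous_on U (\<lambda>(x,u,p). g x u p)"
| "Ck_on (Suc k) U g =
     (continuous_on U (\<lambda>(x,u,p). g x u p) \<and>
      (\<forall>(x,u,p)\<in>U. (\<lambda>t. g t u p) differentiable (at x) \<and>
                    (\<lambda>t. g x t p) differentiable (at u) \<and>
                    (\<lambda>t. g x u t) differentiable (at p)) \<and>
      Ck_on k U (D1 g) \<and> Ck_on k U (D2 g) \<and> Ck_on k U (D3 g))"

text \<open>f is C^3 on [a,b] x R x R: C^3 on some open neighbourhood of that set.\<close>

definition C3_strip :: "real \<Rightarrow> real \<Rightarrow> (real \<Rightarrow> real \<Rightarrow> real \<Rightarrow> real) \<Rightarrow> bool" where
  "C3_strip a b f = (\<exists>U. open U \<and> {a..b} \<times> UNIV \<times> UNIV \<subseteq> U \<and> Ck_on 3 U f)"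

text \<open>Derivative on [a,b] (one-sided at the endpoints).\<close>

definition dv :: "real \<Rightarrow> real \<Rightarrow> (real \<Rightarrow> real) \<Rightarrow> real \<Rightarrow> real" where
  "dv a b v x = vector_derivative v (at x within {a..b})"

definition C1_on :: "real \<Rightarrow> real \<Rightarrow> (real \<Rightarrow> real) \<Rightarrow> bool" where
  "C1_on a b v = ((\<forall>x\<in>{a..b}. v differentiable (at x within {a..b})) \<and>
                  continuous_on {a..b} (dv a b v))"

definition C2_on :: "real \<Rightarrow> real \<Rightarrow> (real \<Rightarrow> real) \<Rightarrow> bool" where
  "C2_on a b v = (C1_on a b v \<and> C1_on a b (dv a b v))"

definition C1_norm :: "real \<Rightarrow> real \<Rightarrow> (real \<Rightarrow> real) \<Rightarrow> real" where
  "C1_norm a b w = (SUP x\<in>{a..b}. \<bar>w x\<bar>) + (SUP x\<in>{a..b}. \<bar>dv a b w x\<bar>)"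

definition Phi :: "real \<Rightarrow> real \<Rightarrow> (real \<Rightarrow> real \<Rightarrow> real \<Rightarrow> real) \<Rightarrow> (real \<Rightarrow> real) \<Rightarrow> real" where
  "Phi a b f v = integral {a..b} (\<lambda>x. f x (v x) (dv a b v x))"

text \<open>Composition along u0: \<frak>f^0(x) = \<frak>f(x, u0 x, u0' x).\<close>

definition along :: "real \<Rightarrow> real \<Rightarrow> (real \<Rightarrow> real \<Rightarrow> real \<Rightarrow> real) \<Rightarrow> (real \<Rightarrow> real) \<Rightarrow> real \<Rightarrow> real" where
  "along a b g u0 x = g x (u0 x) (dv a b u0 x)"

text \<open>Operators B h and C h (f_pu = (f_p)_u, f_up = (f_u)_p).\<close>

definition Bop :: "real \<Rightarrow> real \<Rightarrow> (real \<Rightarrow> real \<Rightarrow> real \<Rightarrow> real) \<Rightarrow> (real \<Rightarrow> real) \<Rightarrow> (real \<Rightarrow> real) \<Rightarrow> real \<Rightarrow> real" where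
  "Bop a b f u0 h x = along a b (D3 (D3 f)) u0 x * dv a b h x + along a b (D2 (D3 f)) u0 x * h x"

definition Cop :: "real \<Rightarrow> real \<Rightarrow> (real \<Rightarrow> real \<Rightarrow> real \<Rightarrow> real) \<Rightarrow> (real \<Rightarrow> real) \<Rightarrow> (real \<Rightarrow> real) \<Rightarrow> real \<Rightarrow> real" where
  "Cop a b f u0 h x = along a b (D3 (D2 f)) u0 x * dv a b h x + along a b (D2 (D2 f)) u0 x * h x"

text \<open>h \<in> C^2([a,b]) solves the Jacobi equation A h = -(B h)' + C h = 0 on [a,b].\<close>

definition jacobi_solution :: "real \<Rightarrow> real \<Rightarrow> (real \<Rightarrow> real \<Rightarrow> real \<Rightarrow> real) \<Rightarrow> (real \<Rightarrow> real) \<Rightarrow> (real \<Rightarrow> real) \<Rightarrow> bool" where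
  "jacobi_solution a b f u0 h =
     (C2_on a b h \<and>
      (\<forall>x\<in>{a..b}. (Bop a b f u0 h has_real_derivative Cop a b f u0 h x) (at x within {a..b})))"

definition weak_minimizer :: "real \<Rightarrow> real \<Rightarrow> (real \<Rightarrow> real \<Rightarrow> real \<Rightarrow> real) \<Rightarrow> (real \<Rightarrow> real) \<Rightarrow> bool" where
  "weak_minimizer a b f u0 = (\<exists>\<epsilon>>0. \<forall>v. C1_on a b v \<and> C1_norm a b (\<lambda>x. v x - u0 x) < \<epsilon>
        \<longrightarrow> Phi a b f v \<ge> Phi a b f u0)"

definition strict_weak_minimizer :: "real \<Rightarrow> real \<Rightarrow> (real \<Rightarrow> real \<Rightarrow> real \<Rightarrow> real) \<Rightarrow> (real \<Rightarrow> real) \<Rightarrow> bool" where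
  "strict_weak_minimizer a b f u0 = (\<exists>\<epsilon>>0. \<forall>v. C1_on a b v \<and> C1_norm a b (\<lambda>x. v x - u0 x) < \<epsilon>
        \<and> (\<exists>x\<in>{a..b}. v x \<noteq> u0 x) \<longrightarrow> Phi a b f v > Phi a b f u0)"

end

theory Submission
  imports Defs
begin

(*
  A second-order Taylor expansion of f, in which the first variation vanishes
  thanks to the natural boundary conditions, gives
    Phi(u0 + eta) - Phi(u0) = Q(eta)/2 + o(|eta|_{H^1}^2)   as |eta|_{C^1} -> 0,
  where Q is the second variation. For eta = h*zeta + s the Jacobi equation and Bh(a) = 0
  turn Q into Picone's form
    zeta(b)^2 h(b) Bh(b) + int f_pp h^2 zeta'^2 + (terms in s).
  If Bh(b) h(b) < 0 then Q(h) < 0. If h(y) = 0 for some y in (a,b], then Bh(y) <> 0 by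
  uniqueness for the Jacobi equation (here f_pp >= c0 > 0 is used), and a C^1 cutoff zeta
  falling from 1 to 0 just before y, together with a small constant s of the sign of -Bh(y),
  makes Q negative. In both cases small multiples of that direction decrease Phi.
  If h has no zero in [a,b] and Bh(b) h(b) > 0, every eta is h*zeta with zeta = eta/h, and
  Picone's form together with a Friedrichs inequality for zeta makes Q coercive in H^1,
  so u0 is a strict weak minimizer.
*)

section \<open>Calculus on a compact interval\<close>

lemma dv_eqI:
  assumes "a < b" "x \<in> {a..b}" "(v has_real_derivative D) (at x within {a..b})"
  shows "dv a b v x = D"
  using assms unfolding dv_def has_real_derivative_iff_has_vector_derivative
  by (simp add: vector_derivative_within_closed_interval)

lemma C1_on_has_real_derivative:
  assumes "C1_on a b v" "x \<in> {a..b}"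
  shows "(v has_real_derivative dv a b v x) (at x within {a..b})"
  using assms unfolding C1_on_def dv_def has_real_derivative_iff_has_vector_derivative
  by (simp add: vector_derivative_works)

lemma C1_on_continuous_dv: "C1_on a b v \<Longrightarrow> continuous_on {a..b} (dv a b v)"
  by (simp add: C1_on_def)

lemma C1_on_continuous: "C1_on a b v \<Longrightarrow> continuous_on {a..b} v"
  unfolding C1_on_def continuous_on_eq_continuous_within
  using differentiable_imp_continuous_within by blast

lemma C1_onI:
  assumes "a < b" "\<And>x. x \<in> {a..b} \<Longrightarrow> (v has_real_derivative v' x) (at x within {a..b})"
    and "continuous_on {a..b} v'"
  shows "C1_on a b v"
proof -
  have "continuous_on {a..b} (dv a b v)"
  proof (rule continuous_on_eq[OF assms(3)])
    show "v' x = dv a b v x" if "x \<in> {a..b}" for x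
      using assms(1,2) that by (metis dv_eqI)
  qed
  then show ?thesis
    using assms(2) unfolding C1_on_def real_differentiable_def by blast
qed

lemma C1_on_const: "a < b \<Longrightarrow> C1_on a b (\<lambda>x. c)"
  by (rule C1_onI[of _ _ _ "\<lambda>_. 0"]) auto

lemma C1_on_add:
  assumes "a < b" "C1_on a b v" "C1_on a b w"
  shows "C1_on a b (\<lambda>x. v x + w x)"
  using assms C1_on_continuous_dv[OF assms(2)] C1_on_continuous_dv[OF assms(3)]
  by (intro C1_onI[where v'="\<lambda>x. dv a b v x + dv a b w x"])
     (auto intro!: derivative_eq_intros C1_on_has_real_derivative continuous_intros)

lemma C1_on_diff:
  assumes "a < b" "C1_on a b v" "C1_on a b w"
  shows "C1_on a b (\<lambda>x. v x - w x)"
  using assms C1_on_continuous_dv[OF assms(2)] C1_on_continuous_dv[OF assms(3)]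
  by (intro C1_onI[where v'="\<lambda>x. dv a b v x - dv a b w x"])
     (auto intro!: derivative_eq_intros C1_on_has_real_derivative continuous_intros)

lemma C1_on_mult:
  assumes "a < b" "C1_on a b v" "C1_on a b w"
  shows "C1_on a b (\<lambda>x. v x * w x)"
  using assms C1_on_continuous_dv[OF assms(2)] C1_on_continuous_dv[OF assms(3)]
    C1_on_continuous[OF assms(2)] C1_on_continuous[OF assms(3)]
  by (intro C1_onI[where v'="\<lambda>x. dv a b v x * w x + v x * dv a b w x"])
     (auto intro!: derivative_eq_intros C1_on_has_real_derivative continuous_intros)

lemma dv_add:
  "a < b \<Longrightarrow> x \<in> {a..b} \<Longrightarrow> C1_on a b v \<Longrightarrow> C1_on a b w \<Longrightarrow>
    dv a b (\<lambda>x. v x + w x) x = dv a b v x + dv a b w x"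
  by (rule dv_eqI) (auto intro!: derivative_eq_intros C1_on_has_real_derivative)

lemma dv_scale:
  "a < b \<Longrightarrow> x \<in> {a..b} \<Longrightarrow> C1_on a b v \<Longrightarrow> dv a b (\<lambda>x. c * v x) x = c * dv a b v x"
  by (rule dv_eqI) (auto intro!: derivative_eq_intros C1_on_has_real_derivative)

lemma C1_on_divide:
  assumes "a < b" "C1_on a b v" "C1_on a b w" "\<forall>x\<in>{a..b}. w x \<noteq> 0"
  shows "C1_on a b (\<lambda>x. v x / w x)"
  using assms C1_on_continuous_dv[OF assms(2)] C1_on_continuous_dv[OF assms(3)]
    C1_on_continuous[OF assms(2)] C1_on_continuous[OF assms(3)]
  by (intro C1_onI[where v'="\<lambda>x. (dv a b v x * w x - v x * dv a b w x) / (w x * w x)"])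
     (auto intro!: derivative_eq_intros C1_on_has_real_derivative continuous_intros)

lemma abs_bounded_on_Icc:
  fixes g :: "real \<Rightarrow> real"
  assumes "continuous_on {a..b} g"
  obtains M where "\<forall>x\<in>{a..b}. \<bar>g x\<bar> \<le> M"
  using compact_imp_bounded[OF compact_continuous_image[OF assms compact_Icc]]
  unfolding bounded_iff by auto

lemma abs_le_C1_norm:
  assumes "C1_on a b v" "x \<in> {a..b}"
  shows "\<bar>v x\<bar> \<le> C1_norm a b v" "\<bar>dv a b v x\<bar> \<le> C1_norm a b v"
proof -
  obtain B0 where "\<forall>x\<in>{a..b}. \<bar>v x\<bar> \<le> B0"
    using abs_bounded_on_Icc[OF C1_on_continuous[OF assms(1)]] .
  then have 0: "\<bar>v x\<bar> \<le> (SUP x\<in>{a..b}. \<bar>v x\<bar>)"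
    by (intro cSUP_upper[OF assms(2)] bdd_aboveI2) auto
  obtain B1 where "\<forall>x\<in>{a..b}. \<bar>dv a b v x\<bar> \<le> B1"
    using abs_bounded_on_Icc[OF C1_on_continuous_dv[OF assms(1)]] .
  then have 1: "\<bar>dv a b v x\<bar> \<le> (SUP x\<in>{a..b}. \<bar>dv a b v x\<bar>)"
    by (intro cSUP_upper[OF assms(2)] bdd_aboveI2) auto
  from 0 1 show "\<bar>v x\<bar> \<le> C1_norm a b v" "\<bar>dv a b v x\<bar> \<le> C1_norm a b v"
    unfolding C1_norm_def by (smt (verit) abs_ge_zero)+
qed

lemma C1_norm_le:
  assumes "a \<le> b" "\<forall>x\<in>{a..b}. \<bar>v x\<bar> \<le> B0 \<and> \<bar>dv a b v x\<bar> \<le> B1"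
  shows "C1_norm a b v \<le> B0 + B1"
  unfolding C1_norm_def using assms by (intro add_mono cSUP_least) auto

lemma mono_on_Icc_if_deriv_nonneg:
  fixes F :: "real \<Rightarrow> real"
  assumes "\<And>t. t \<in> {a..b} \<Longrightarrow> (F has_real_derivative F' t) (at t within {a..b})"
    and "\<And>t. t \<in> {a..b} \<Longrightarrow> F' t \<ge> 0"
    and "x \<in> {a..b}" "y \<in> {a..b}" "x \<le> y"
  shows "F x \<le> F y"
proof -
  have "\<exists>\<xi>\<in>{x..y}. F y - F x = (\<lambda>d. F' \<xi> * d) (y - x)"
  proof (rule mvt_very_simple[OF \<open>x \<le> y\<close>])
    fix t assume "x \<le> t" "t \<le> y"
    with assms(3,4) have "(F has_real_derivative F' t) (at t within {x..y})"
      by (intro DERIV_subset[OF assms(1)]) auto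
    then show "(F has_derivative (\<lambda>d. F' t * d)) (at t within {x..y})"
      by (simp add: has_field_derivative_def)
  qed
  then obtain \<xi> where "\<xi> \<in> {x..y}" "F y - F x = F' \<xi> * (y - x)"
    by auto
  moreover have "F' \<xi> \<ge> 0"
    using assms(2-4) \<open>\<xi> \<in> {x..y}\<close> by auto
  ultimately show ?thesis
    using \<open>x \<le> y\<close> by (metis diff_ge_0_iff_ge mult_nonneg_nonneg)
qed

lemma gronwall_zero:
  fixes E :: "real \<Rightarrow> real"
  assumes der: "\<And>t. t \<in> {a..b} \<Longrightarrow> (E has_real_derivative E' t) (at t within {a..b})"
    and bound: "\<And>t. t \<in> {a..b} \<Longrightarrow> \<bar>E' t\<bar> \<le> L * E t"
    and nonneg: "\<And>t. t \<in> {a..b} \<Longrightarrow> E t \<ge> 0"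
    and y: "y \<in> {a..b}" "E y = 0" and x: "x \<in> {a..b}"
  shows "E x = 0"
proof -
  have "E x * exp (- L * x) \<le> E y * exp (- L * y)" if "y \<le> x"
  proof -
    have "- (E y * exp (- L * y)) \<le> - (E x * exp (- L * x))"
    proof (rule mono_on_Icc_if_deriv_nonneg[OF _ _ y(1) x that])
      fix t assume t: "t \<in> {a..b}"
      show "((\<lambda>t. - (E t * exp (- L * t))) has_real_derivative (L * E t - E' t) * exp (- L * t))
          (at t within {a..b})"
        using der[OF t] by (auto intro!: derivative_eq_intros simp: algebra_simps)
      show "(L * E t - E' t) * exp (- L * t) \<ge> 0"
        using bound[OF t] by simp
    qed
    then show ?thesis by simp
  qed
  moreover have "E x * exp (L * x) \<le> E y * exp (L * y)" if "x \<le> y"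
  proof (rule mono_on_Icc_if_deriv_nonneg[OF _ _ x y(1) that])
    fix t assume t: "t \<in> {a..b}"
    show "((\<lambda>t. E t * exp (L * t)) has_real_derivative (E' t + L * E t) * exp (L * t))
        (at t within {a..b})"
      using der[OF t] by (auto intro!: derivative_eq_intros simp: algebra_simps)
    show "(E' t + L * E t) * exp (L * t) \<ge> 0"
      using bound[OF t] by simp
  qed
  ultimately have "E x \<le> 0"
    using y(2) by (cases "y \<le> x") (auto simp: mult_le_0_iff)
  with nonneg[OF x] show ?thesis by simp
qed

lemma C1_small_multiple:
  assumes "a < b" "C1_on a b \<eta>" "\<delta> > 0"
  obtains \<tau> where "\<tau> > 0"
    "\<And>x. x \<in> {a..b} \<Longrightarrow> \<bar>\<tau> * \<eta> x\<bar> \<le> \<delta> \<and> \<bar>dv a b (\<lambda>x. \<tau> * \<eta> x) x\<bar> \<le> \<delta>"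
proof -
  obtain N0 N1 where N0: "\<forall>x\<in>{a..b}. \<bar>\<eta> x\<bar> \<le> N0" and N1: "\<forall>x\<in>{a..b}. \<bar>dv a b \<eta> x\<bar> \<le> N1"
    using abs_bounded_on_Icc C1_on_continuous[OF assms(2)] C1_on_continuous_dv[OF assms(2)] by metis
  define N where "N = max N0 N1 + 1"
  have "N > 0"
    using N0 assms(1) by (smt (verit) N_def abs_ge_zero atLeastAtMost_iff)
  show ?thesis
  proof (rule that[of "\<delta> / N"])
    show "\<delta> / N > 0" using \<open>N > 0\<close> assms(3) by simp
    fix x assume x: "x \<in> {a..b}"
    have "\<bar>\<eta> x\<bar> \<le> max N0 N1" "\<bar>dv a b \<eta> x\<bar> \<le> max N0 N1"
      using N0 N1 x by (auto simp: le_max_iff_disj)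
    then have "\<bar>\<eta> x\<bar> \<le> N" "\<bar>dv a b \<eta> x\<bar> \<le> N"
      unfolding N_def by linarith+
    moreover have "\<bar>\<delta> / N * y\<bar> \<le> \<delta>" if "\<bar>y\<bar> \<le> N" for y
      using that \<open>N > 0\<close> assms(3) by (simp add: abs_mult field_simps)
    ultimately show "\<bar>\<delta> / N * \<eta> x\<bar> \<le> \<delta> \<and> \<bar>dv a b (\<lambda>x. \<delta> / N * \<eta> x) x\<bar> \<le> \<delta>"
      by (simp only: dv_scale[OF assms(1) x assms(2)])
  qed
qed

lemma dv_eqI_on:
  assumes "a < b" "x \<in> {a..b}" "\<forall>y\<in>{a..b}. v y = w y"
    and "(w has_real_derivative D) (at x within {a..b})"
  shows "dv a b v x = D"
proof (rule dv_eqI[OF assms(1,2)])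
  show "(v has_real_derivative D) (at x within {a..b})"
    by (rule has_field_derivative_transform_within[OF assms(4), of 1]) (use assms(2,3) in auto)
qed

lemma C1_on_abs_diff_le:
  assumes v: "C1_on a b v" and B: "\<forall>t\<in>{a..b}. \<bar>dv a b v t\<bar> \<le> B"
    and "x \<in> {a..b}" "y \<in> {a..b}"
  shows "\<bar>v x - v y\<bar> \<le> B * \<bar>x - y\<bar>"
proof -
  have "\<bar>v q - v p\<bar> \<le> B * (q - p)" if pq: "p \<in> {a..b}" "q \<in> {a..b}" "p \<le> q" for p q
  proof -
    have "B * p + \<sigma> * v p \<le> B * q + \<sigma> * v q" if "\<bar>\<sigma>\<bar> = 1" for \<sigma>
    proof (rule mono_on_Icc_if_deriv_nonneg[of a b "\<lambda>t. B * t + \<sigma> * v t" "\<lambda>t. B + \<sigma> * dv a b v t", OF _ _ pq])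
      fix t assume t: "t \<in> {a..b}"
      show "((\<lambda>t. B * t + \<sigma> * v t) has_real_derivative B + \<sigma> * dv a b v t) (at t within {a..b})"
        using C1_on_has_real_derivative[OF v t] by (auto intro!: derivative_eq_intros)
      have "\<bar>\<sigma> * dv a b v t\<bar> \<le> B"
        using B t that by (simp add: abs_mult)
      then show "0 \<le> B + \<sigma> * dv a b v t"
        by linarith
    qed
    from this[of 1] this[of "-1"] show ?thesis
      by (simp add: abs_le_iff algebra_simps)
  qed
  from this[of x y] this[of y x] assms(3,4) show ?thesis
    by (cases "x \<le> y") (auto simp: abs_minus_commute)
qed

text \<open>Integrate \<open>((x - a) \<zeta>(x)\<^sup>2)'\<close> over \<open>[a, b]\<close> and absorb the cross term
  \<open>2 (x - a) \<zeta> \<zeta>'\<close> into \<open>\<zeta>\<^sup>2 / 2 + 2 (x - a)\<^sup>2 \<zeta>'\<^sup>2\<close>.\<close>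

lemma friedrichs_inequality:
  assumes "a < b" "C1_on a b \<zeta>"
  shows "integral {a..b} (\<lambda>x. (\<zeta> x)\<^sup>2)
    \<le> 2 * (b - a) * (\<zeta> b)\<^sup>2 + 4 * (b - a)\<^sup>2 * integral {a..b} (\<lambda>x. (dv a b \<zeta> x)\<^sup>2)"
proof -
  define Z where "Z = integral {a..b} (\<lambda>x. (\<zeta> x)\<^sup>2)"
  define Y where "Y = integral {a..b} (\<lambda>x. (dv a b \<zeta> x)\<^sup>2)"
  define W where "W x = (\<zeta> x)\<^sup>2 + (x - a) * (2 * \<zeta> x * dv a b \<zeta> x)" for x
  have int: "(\<lambda>x. (\<zeta> x)\<^sup>2) integrable_on {a..b}" "(\<lambda>x. (dv a b \<zeta> x)\<^sup>2) integrable_on {a..b}"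
    using C1_on_continuous[OF assms(2)] C1_on_continuous_dv[OF assms(2)]
    by (auto intro!: integrable_continuous_interval continuous_intros)
  have W: "(W has_integral (b - a) * (\<zeta> b)\<^sup>2) {a..b}"
  proof -
    have "(W has_integral (b - a) * (\<zeta> b)\<^sup>2 - (a - a) * (\<zeta> a)\<^sup>2) {a..b}"
    proof (rule fundamental_theorem_of_calculus[OF less_imp_le[OF assms(1)]])
      fix x assume x: "x \<in> {a..b}"
      show "((\<lambda>x. (x - a) * (\<zeta> x)\<^sup>2) has_vector_derivative W x) (at x within {a..b})"
        unfolding has_real_derivative_iff_has_vector_derivative[symmetric] W_def
        using C1_on_has_real_derivative[OF assms(2) x]
        by (auto intro!: derivative_eq_intros simp: power2_eq_square algebra_simps)
    qed
    then show ?thesis by simp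
  qed
  have "Z \<le> integral {a..b} (\<lambda>x. W x + ((\<zeta> x)\<^sup>2 / 2 + 2 * (b - a)\<^sup>2 * (dv a b \<zeta> x)\<^sup>2))"
    unfolding Z_def
  proof (rule integral_le[OF int(1)])
    show "(\<lambda>x. W x + ((\<zeta> x)\<^sup>2 / 2 + 2 * (b - a)\<^sup>2 * (dv a b \<zeta> x)\<^sup>2)) integrable_on {a..b}"
      using W int by (intro integrable_add integrable_divide integrable_on_mult_right) auto
    fix x assume x: "x \<in> {a..b}"
    have "0 \<le> (\<zeta> x + 2 * (x - a) * dv a b \<zeta> x)\<^sup>2 / 2"
      by simp
    moreover have "(x - a)\<^sup>2 * (dv a b \<zeta> x)\<^sup>2 \<le> (b - a)\<^sup>2 * (dv a b \<zeta> x)\<^sup>2"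
      using x by (intro mult_right_mono power_mono) auto
    ultimately show "(\<zeta> x)\<^sup>2 \<le> W x + ((\<zeta> x)\<^sup>2 / 2 + 2 * (b - a)\<^sup>2 * (dv a b \<zeta> x)\<^sup>2)"
      by (simp add: W_def power2_eq_square algebra_simps)
  qed
  also have "\<dots> = (b - a) * (\<zeta> b)\<^sup>2 + (Z / 2 + 2 * (b - a)\<^sup>2 * Y)"
    unfolding Z_def Y_def
    by (intro integral_unique has_integral_add W has_integral_divide has_integral_mult_right
          int[THEN integrable_integral])
  finally have "Z \<le> (b - a) * (\<zeta> b)\<^sup>2 + (Z / 2 + 2 * (b - a)\<^sup>2 * Y)" .
  moreover have "2 * (b - a) * (\<zeta> b)\<^sup>2 = 2 * ((b - a) * (\<zeta> b)\<^sup>2)"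
    "4 * (b - a)\<^sup>2 * Y = 2 * (2 * (b - a)\<^sup>2 * Y)"
    by simp_all
  ultimately show ?thesis
    unfolding Z_def[symmetric] Y_def[symmetric] by linarith
qed

lemma weighted_average_dist_le:
  fixes w k :: "real \<Rightarrow> real"
  assumes w: "(w has_integral 1) S" and wk: "(\<lambda>x. w x * k x) integrable_on S"
    and nonneg: "\<And>x. x \<in> S \<Longrightarrow> w x \<ge> 0"
    and close: "\<And>x. x \<in> S \<Longrightarrow> w x \<noteq> 0 \<Longrightarrow> \<bar>k x - K\<bar> \<le> \<epsilon>"
  shows "\<bar>integral S (\<lambda>x. w x * k x) - K\<bar> \<le> \<epsilon>"
proof -
  have wK: "((\<lambda>x. w x * K) has_integral K) S" and w\<epsilon>: "((\<lambda>x. \<epsilon> * w x) has_integral \<epsilon>) S"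
    using has_integral_mult_left[OF w, of K] has_integral_mult_right[OF w, of \<epsilon>] by simp_all
  have "integral S (\<lambda>x. w x * k x) - K = integral S (\<lambda>x. w x * k x - w x * K)"
    using integral_diff[OF wk has_integral_integrable[OF wK]] integral_unique[OF wK] by simp
  also have "norm \<dots> \<le> integral S (\<lambda>x. \<epsilon> * w x)"
  proof (rule integral_norm_bound_integral)
    show "(\<lambda>x. w x * k x - w x * K) integrable_on S"
      using wk wK by (intro integrable_diff) (auto simp: has_integral_integrable)
    show "(\<lambda>x. \<epsilon> * w x) integrable_on S"
      using w\<epsilon> by (rule has_integral_integrable)
    fix x assume x: "x \<in> S"
    show "norm (w x * k x - w x * K) \<le> \<epsilon> * w x"
    proof (cases "w x = 0")
      case False
      have "norm (w x * k x - w x * K) = w x * \<bar>k x - K\<bar>"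
        using nonneg[OF x] by (simp add: abs_mult right_diff_distrib[symmetric])
      also have "\<dots> \<le> w x * \<epsilon>"
        using nonneg[OF x] close[OF x False] by (rule mult_left_mono[rotated])
      finally show ?thesis by (simp add: mult.commute)
    qed simp
  qed
  finally show ?thesis
    using integral_unique[OF w\<epsilon>] integral_unique[OF w] by simp
qed

section \<open>A \<open>C\<^sup>1\<close> cutoff\<close>

definition smoothstep :: "real \<Rightarrow> real"
  where "smoothstep t = 3 * (max 0 (min 1 t))\<^sup>2 - 2 * (max 0 (min 1 t)) ^ 3"

definition smoothstep_deriv :: "real \<Rightarrow> real"
  where "smoothstep_deriv t = 6 * max 0 (min 1 t) * (1 - max 0 (min 1 t))"

lemma smoothstep_eq_0: "t \<le> 0 \<Longrightarrow> smoothstep t = 0"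
  by (simp add: smoothstep_def)

lemma smoothstep_eq_1: "1 \<le> t \<Longrightarrow> smoothstep t = 1"
  by (simp add: smoothstep_def)

lemma smoothstep_eq_cubic: "0 \<le> t \<Longrightarrow> t \<le> 1 \<Longrightarrow> smoothstep t = 3 * t\<^sup>2 - 2 * t ^ 3"
  by (simp add: smoothstep_def)

lemma smoothstep_deriv_eq_0: "t \<le> 0 \<or> 1 \<le> t \<Longrightarrow> smoothstep_deriv t = 0"
  by (auto simp: smoothstep_deriv_def)

lemma smoothstep_deriv_bounds: "0 \<le> smoothstep_deriv t" "smoothstep_deriv t \<le> 3 / 2"
proof -
  define c where "c = max 0 (min 1 t)"
  have "smoothstep_deriv t = 3 / 2 - 6 * (c - 1 / 2)\<^sup>2"
    by (simp add: smoothstep_deriv_def c_def[symmetric] power2_eq_square algebra_simps)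
  then show "smoothstep_deriv t \<le> 3 / 2" by simp
qed (simp add: smoothstep_deriv_def)

lemma has_real_derivative_at_split:
  assumes "(f has_real_derivative D) (at x within {..x})" "(f has_real_derivative D) (at x within {x..})"
  shows "(f has_real_derivative D) (at x)"
proof -
  have "(f has_real_derivative D) (at x within {..x} \<union> {x..})"
    using assms unfolding has_field_derivative_def has_derivative_within Lim_within_Un by auto
  moreover have "{..x} \<union> {x..} = UNIV" by auto
  ultimately show ?thesis by simp
qed

text \<open>On each side of \<open>t\<close> the clamped cubic agrees near \<open>t\<close> with a constant or with the
  cubic itself, whose derivative vanishes at the junctions \<open>0\<close> and \<open>1\<close>.\<close>

lemma smoothstep_has_real_derivative: "(smoothstep has_real_derivative smoothstep_deriv t) (at t)"
proof -
  have transform: "(smoothstep has_real_derivative smoothstep_deriv t) (at t within S)"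
    if "(g has_real_derivative smoothstep_deriv t) (at t within S)" "d > 0" "t \<in> S"
      "\<And>s. s \<in> S \<Longrightarrow> \<bar>s - t\<bar> < d \<Longrightarrow> smoothstep s = g s" for g d S
    by (rule has_field_derivative_transform_within[OF that(1,2,3)])
       (use that(4) in \<open>auto simp: dist_real_def\<close>)
  have cubic: "((\<lambda>s. 3 * s\<^sup>2 - 2 * s ^ 3) has_real_derivative smoothstep_deriv t) (at t within S)"
    if "0 \<le> t" "t \<le> 1" for S
    using that by (auto intro!: derivative_eq_intros simp: smoothstep_deriv_def power2_eq_square algebra_simps)
  have const: "((\<lambda>s. c) has_real_derivative smoothstep_deriv t) (at t within S)"
    if "t \<le> 0 \<or> 1 \<le> t" for c S
    using smoothstep_deriv_eq_0[OF that] by simp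
  consider "t < 0" | "t = 0" | "0 < t" "t < 1" | "t = 1" | "1 < t" by linarith
  then show ?thesis
  proof cases
    case 1
    then show ?thesis
      using transform[OF const[of 0], of "- t" UNIV] smoothstep_eq_0 by simp
  next
    case 2
    show ?thesis
    proof (rule has_real_derivative_at_split)
      show "(smoothstep has_real_derivative smoothstep_deriv t) (at t within {..t})"
        using transform[OF const[of 0], of 1 "{..t}"] smoothstep_eq_0 2 by simp
      show "(smoothstep has_real_derivative smoothstep_deriv t) (at t within {t..})"
        using transform[OF cubic, of 1 "{t..}"] smoothstep_eq_cubic 2 by simp
    qed
  next
    case 3
    then have "smoothstep s = 3 * s\<^sup>2 - 2 * s ^ 3" if "\<bar>s - t\<bar> < min t (1 - t)" for s
      using that by (intro smoothstep_eq_cubic) auto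
    with 3 show ?thesis
      using transform[OF cubic, of "min t (1 - t)" UNIV] by simp
  next
    case 4
    show ?thesis
    proof (rule has_real_derivative_at_split)
      show "(smoothstep has_real_derivative smoothstep_deriv t) (at t within {..t})"
        using transform[OF cubic, of 1 "{..t}"] smoothstep_eq_cubic 4 by simp
      show "(smoothstep has_real_derivative smoothstep_deriv t) (at t within {t..})"
        using transform[OF const[of 1], of 1 "{t..}"] smoothstep_eq_1 4 by simp
    qed
  next
    case 5
    then show ?thesis
      using transform[OF const[of 1], of "t - 1" UNIV] smoothstep_eq_1 by simp
  qed
qed

definition cutoff :: "real \<Rightarrow> real \<Rightarrow> real \<Rightarrow> real"
  where "cutoff y \<delta> x = smoothstep ((y - x) / \<delta>)"

definition cutoff_density :: "real \<Rightarrow> real \<Rightarrow> real \<Rightarrow> real"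
  where "cutoff_density y \<delta> x = smoothstep_deriv ((y - x) / \<delta>) / \<delta>"

lemma has_real_derivative_cutoff:
  assumes "\<delta> > 0"
  shows "(cutoff y \<delta> has_real_derivative - cutoff_density y \<delta> x) (at x within S)"
proof -
  have "((\<lambda>x. (y - x) / \<delta>) has_real_derivative - 1 / \<delta>) (at x within S)"
    using assms by (auto intro!: derivative_eq_intros)
  from DERIV_chain2[OF smoothstep_has_real_derivative this] show ?thesis
    by (simp add: cutoff_def[abs_def] cutoff_density_def)
qed

lemma cutoff_eq_0: "\<delta> > 0 \<Longrightarrow> y \<le> x \<Longrightarrow> cutoff y \<delta> x = 0"
  by (simp add: cutoff_def smoothstep_eq_0 divide_nonpos_pos)

lemma cutoff_eq_1: "\<delta> > 0 \<Longrightarrow> x \<le> y - \<delta> \<Longrightarrow> cutoff y \<delta> x = 1"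
  by (simp add: cutoff_def smoothstep_eq_1 le_divide_eq)

lemma cutoff_density_bounds:
  assumes "\<delta> > 0"
  shows "0 \<le> cutoff_density y \<delta> x" "cutoff_density y \<delta> x \<le> 3 / (2 * \<delta>)"
  using smoothstep_deriv_bounds[of "(y - x) / \<delta>"] assms
  by (simp_all add: cutoff_density_def field_simps)

lemma cutoff_density_eq_0:
  assumes "\<delta> > 0" "x \<le> y - \<delta> \<or> y \<le> x"
  shows "cutoff_density y \<delta> x = 0"
proof -
  from assms have "(y - x) / \<delta> \<le> 0 \<or> 1 \<le> (y - x) / \<delta>"
    by (auto simp: divide_nonpos_pos le_divide_eq)
  then show ?thesis
    by (simp add: cutoff_density_def smoothstep_deriv_eq_0)
qed

lemma continuous_on_cutoff_density: "continuous_on S (cutoff_density y \<delta>)"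
  unfolding cutoff_density_def smoothstep_deriv_def
  by (cases "\<delta> = 0") (auto intro!: continuous_intros)

lemma C1_on_cutoff: "a < b \<Longrightarrow> \<delta> > 0 \<Longrightarrow> C1_on a b (cutoff y \<delta>)"
  by (rule C1_onI[OF _ has_real_derivative_cutoff
        continuous_on_minus[OF continuous_on_cutoff_density]])

lemma dv_cutoff:
  "a < b \<Longrightarrow> \<delta> > 0 \<Longrightarrow> x \<in> {a..b} \<Longrightarrow> dv a b (cutoff y \<delta>) x = - cutoff_density y \<delta> x"
  by (rule dv_eqI[OF _ _ has_real_derivative_cutoff])

lemma has_integral_cutoff_density:
  assumes "\<delta> > 0" "a \<le> y - \<delta>" "y \<le> b"
  shows "(cutoff_density y \<delta> has_integral 1) {a..b}"
proof -
  have "((\<lambda>x. - cutoff_density y \<delta> x) has_integral cutoff y \<delta> b - cutoff y \<delta> a) {a..b}"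
    by (rule fundamental_theorem_of_calculus)
       (use assms has_real_derivative_cutoff[OF assms(1)] in
         \<open>auto simp: has_real_derivative_iff_has_vector_derivative[symmetric]\<close>)
  from has_integral_neg[OF this] show ?thesis
    using cutoff_eq_0[OF assms(1,3)] cutoff_eq_1[OF assms(1,2)] by simp
qed

lemma cutoff_average_dist_le:
  fixes k :: "real \<Rightarrow> real"
  assumes k: "continuous_on {a..b} k" and y: "y \<in> {a..b}" and "\<epsilon> > 0"
  obtains d where "d > 0" "\<And>\<delta>. 0 < \<delta> \<Longrightarrow> \<delta> \<le> d \<Longrightarrow> a \<le> y - \<delta> \<Longrightarrow>
    \<bar>integral {a..b} (\<lambda>x. cutoff_density y \<delta> x * k x) - k y\<bar> \<le> \<epsilon>"
proof -
  obtain d where "d > 0" and d: "\<forall>x\<in>{a..b}. \<bar>x - y\<bar> < d \<longrightarrow> \<bar>k x - k y\<bar> < \<epsilon>"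
    using k y \<open>\<epsilon> > 0\<close> unfolding continuous_on_iff dist_real_def by blast
  show ?thesis
  proof (rule that[OF \<open>d > 0\<close>])
    fix \<delta> :: real assume "0 < \<delta>" "\<delta> \<le> d" "a \<le> y - \<delta>"
    show "\<bar>integral {a..b} (\<lambda>x. cutoff_density y \<delta> x * k x) - k y\<bar> \<le> \<epsilon>"
    proof (rule weighted_average_dist_le)
      show "(cutoff_density y \<delta> has_integral 1) {a..b}"
        using has_integral_cutoff_density \<open>0 < \<delta>\<close> \<open>a \<le> y - \<delta>\<close> y by auto
      show "(\<lambda>x. cutoff_density y \<delta> x * k x) integrable_on {a..b}"
        using continuous_on_cutoff_density k by (intro integrable_continuous_interval continuous_intros)
      show "0 \<le> cutoff_density y \<delta> x" for x
        using cutoff_density_bounds[OF \<open>0 < \<delta>\<close>] by simp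
      show "\<bar>k x - k y\<bar> \<le> \<epsilon>" if "x \<in> {a..b}" "cutoff_density y \<delta> x \<noteq> 0" for x
      proof -
        have "\<not> (x \<le> y - \<delta> \<or> y \<le> x)"
          using that(2) cutoff_density_eq_0[OF \<open>0 < \<delta>\<close>, of x y] by auto
        then have "\<bar>x - y\<bar> < d"
          using \<open>\<delta> \<le> d\<close> by auto
        then show ?thesis
          using d that(1) by fastforce
      qed
    qed
  qed
qed

section \<open>Partial derivatives\<close>

lemma Ck_on_continuous: "Ck_on k U g \<Longrightarrow> continuous_on U (\<lambda>(x,u,p). g x u p)"
  by (cases k) auto

lemma Ck_on_has_D2:
  "Ck_on (Suc k) U g \<Longrightarrow> (x,u,p) \<in> U \<Longrightarrow> ((\<lambda>t. g x t p) has_real_derivative D2 g x u p) (at u)"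
  unfolding D2_def by (auto simp: DERIV_deriv_iff_real_differentiable)

lemma Ck_on_has_D3:
  "Ck_on (Suc k) U g \<Longrightarrow> (x,u,p) \<in> U \<Longrightarrow> ((\<lambda>t. g x u t) has_real_derivative D3 g x u p) (at p)"
  unfolding D3_def by (auto simp: DERIV_deriv_iff_real_differentiable)

lemma Maclaurin_1_bi_le:
  fixes F F' :: "real \<Rightarrow> real"
  assumes "\<And>t. (F has_real_derivative F' t) (at t)"
  obtains t where "\<bar>t\<bar> \<le> \<bar>e\<bar>" "F (u + e) = F u + F' (u + t) * e"
proof -
  define diff where "diff m = (if m = 0 then (\<lambda>s. F (u + s)) else (\<lambda>s. F' (u + s)))"
    for m :: nat
  have "\<forall>m t. m < 1 \<and> \<bar>t\<bar> \<le> \<bar>e\<bar> \<longrightarrow> (diff m has_real_derivative diff (Suc m) t) (at t)"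
    using assms by (simp add: diff_def add.commute flip: DERIV_shift)
  from Maclaurin_bi_le[of diff "\<lambda>s. F (u + s)", OF _ this] that show ?thesis
    by (auto simp: diff_def)
qed

lemma Maclaurin_2_bi_le:
  fixes F F' F'' :: "real \<Rightarrow> real"
  assumes "\<And>t. (F has_real_derivative F' t) (at t)" "\<And>t. (F' has_real_derivative F'' t) (at t)"
  obtains t where "\<bar>t\<bar> \<le> \<bar>e\<bar>" "F (u + e) = F u + F' u * e + F'' (u + t) * e\<^sup>2 / 2"
proof -
  define diff where "diff m =
      (if m = 0 then (\<lambda>s. F (u + s)) else if m = 1 then (\<lambda>s. F' (u + s)) else (\<lambda>s. F'' (u + s)))"
    for m :: nat
  have "\<forall>m t. m < 2 \<and> \<bar>t\<bar> \<le> \<bar>e\<bar> \<longrightarrow> (diff m has_real_derivative diff (Suc m) t) (at t)"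
    using assms by (auto simp: diff_def less_2_cases_iff add.commute DERIV_shift[symmetric])
  from Maclaurin_bi_le[of diff "\<lambda>s. F (u + s)", OF _ this] that show ?thesis
    by (auto simp: diff_def numeral_2_eq_2)
qed

lemma abs_quadratic_form_le:
  fixes e z \<alpha> \<beta> \<gamma> \<epsilon> :: real
  assumes "\<bar>\<alpha>\<bar> \<le> \<epsilon>" "\<bar>\<beta>\<bar> \<le> \<epsilon>" "\<bar>\<gamma>\<bar> \<le> \<epsilon>"
  shows "\<bar>(\<beta> * z\<^sup>2 + 2 * \<gamma> * e * z + \<alpha> * e\<^sup>2) / 2\<bar> \<le> \<epsilon> * (e\<^sup>2 + z\<^sup>2)"
proof -
  have "2 * (\<bar>e\<bar> * \<bar>z\<bar>) \<le> e\<^sup>2 + z\<^sup>2"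
    using sum_squares_bound[of "\<bar>e\<bar>" "\<bar>z\<bar>"] by (simp add: power2_eq_square)
  then have "\<bar>\<gamma>\<bar> * (2 * (\<bar>e\<bar> * \<bar>z\<bar>)) \<le> \<epsilon> * (e\<^sup>2 + z\<^sup>2)"
    using assms(3) by (intro mult_mono) auto
  moreover have "\<bar>\<alpha>\<bar> * e\<^sup>2 \<le> \<epsilon> * e\<^sup>2" "\<bar>\<beta>\<bar> * z\<^sup>2 \<le> \<epsilon> * z\<^sup>2"
    using assms(1,2) by (simp_all add: mult_right_mono)
  moreover have "\<bar>\<beta> * z\<^sup>2 + 2 * \<gamma> * e * z + \<alpha> * e\<^sup>2\<bar>
      \<le> \<bar>\<beta> * z\<^sup>2\<bar> + \<bar>2 * \<gamma> * e * z\<bar> + \<bar>\<alpha> * e\<^sup>2\<bar>"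
    using abs_triangle_ineq[of "\<beta> * z\<^sup>2 + 2 * \<gamma> * e * z" "\<alpha> * e\<^sup>2"]
      abs_triangle_ineq[of "\<beta> * z\<^sup>2" "2 * \<gamma> * e * z"] by linarith
  moreover have "\<bar>\<beta> * z\<^sup>2\<bar> + \<bar>2 * \<gamma> * e * z\<bar> + \<bar>\<alpha> * e\<^sup>2\<bar>
      = \<bar>\<beta>\<bar> * z\<^sup>2 + \<bar>\<gamma>\<bar> * (2 * (\<bar>e\<bar> * \<bar>z\<bar>)) + \<bar>\<alpha>\<bar> * e\<^sup>2"
    by (simp add: abs_mult)
  ultimately show ?thesis
    by (simp add: field_simps)
qed

lemma taylor2_remainder_le:
  assumes f: "Ck_on (Suc (Suc k)) U f" and U: "\<And>u p. (x,u,p) \<in> U"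
    and osc_uu: "\<And>s. \<bar>s\<bar> \<le> \<bar>e\<bar> \<Longrightarrow> \<bar>D2 (D2 f) x (u+s) p - D2 (D2 f) x u p\<bar> \<le> \<epsilon>"
    and osc_pu: "\<And>s. \<bar>s\<bar> \<le> \<bar>e\<bar> \<Longrightarrow> \<bar>D2 (D3 f) x (u+s) p - D2 (D3 f) x u p\<bar> \<le> \<epsilon>"
    and osc_pp: "\<And>t. \<bar>t\<bar> \<le> \<bar>z\<bar> \<Longrightarrow> \<bar>D3 (D3 f) x (u+e) (p+t) - D3 (D3 f) x u p\<bar> \<le> \<epsilon>"
  shows "\<bar>f x (u+e) (p+z) - f x u p - (D2 f x u p * e + D3 f x u p * z)
          - (D3 (D3 f) x u p * z\<^sup>2 + 2 * D2 (D3 f) x u p * e * z + D2 (D2 f) x u p * e\<^sup>2) / 2\<bar>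
         \<le> \<epsilon> * (e\<^sup>2 + z\<^sup>2)"
proof -
  have f2: "Ck_on (Suc k) U (D2 f)" "Ck_on (Suc k) U (D3 f)"
    using f by auto
  obtain s where s: "\<bar>s\<bar> \<le> \<bar>e\<bar>"
    "f x (u+e) p = f x u p + D2 f x u p * e + D2 (D2 f) x (u+s) p * e\<^sup>2/2"
    using Maclaurin_2_bi_le[of "\<lambda>t. f x t p" "\<lambda>t. D2 f x t p" "\<lambda>t. D2 (D2 f) x t p"]
      Ck_on_has_D2[OF f U] Ck_on_has_D2[OF f2(1) U] by metis
  obtain t where t: "\<bar>t\<bar> \<le> \<bar>z\<bar>"
    "f x (u+e) (p+z) = f x (u+e) p + D3 f x (u+e) p * z + D3 (D3 f) x (u+e) (p+t) * z\<^sup>2/2"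
    using Maclaurin_2_bi_le[of "\<lambda>t. f x (u+e) t" "\<lambda>t. D3 f x (u+e) t" "\<lambda>t. D3 (D3 f) x (u+e) t"]
      Ck_on_has_D3[OF f U] Ck_on_has_D3[OF f2(2) U] by metis
  obtain r where r: "\<bar>r\<bar> \<le> \<bar>e\<bar>" "D3 f x (u+e) p = D3 f x u p + D2 (D3 f) x (u+r) p * e"
    using Maclaurin_1_bi_le[of "\<lambda>s. D3 f x s p" "\<lambda>s. D2 (D3 f) x s p"] Ck_on_has_D2[OF f2(2) U]
    by metis
  have remainder: "f x (u+e) (p+z) - f x u p - (D2 f x u p * e + D3 f x u p * z)
          - (D3 (D3 f) x u p * z\<^sup>2 + 2 * D2 (D3 f) x u p * e * z + D2 (D2 f) x u p * e\<^sup>2) / 2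
     = ((D3 (D3 f) x (u+e) (p+t) - D3 (D3 f) x u p) * z\<^sup>2
          + 2 * (D2 (D3 f) x (u+r) p - D2 (D3 f) x u p) * e * z
          + (D2 (D2 f) x (u+s) p - D2 (D2 f) x u p) * e\<^sup>2) / 2"
    unfolding s(2) t(2) r(2) by (simp add: field_simps)
  show ?thesis
    unfolding remainder by (rule abs_quadratic_form_le[OF osc_uu[OF s(1)] osc_pp[OF t(1)] osc_pu[OF r(1)]])
qed

lemma second_difference_eq:
  fixes G Gu Gup :: "real \<Rightarrow> real \<Rightarrow> real"
  assumes "\<And>u p. ((\<lambda>u. G u p) has_real_derivative Gu u p) (at u)"
    and "\<And>u p. ((\<lambda>p. Gu u p) has_real_derivative Gup u p) (at p)"
  obtains \<sigma> \<tau> where "\<bar>\<sigma>\<bar> \<le> \<bar>s\<bar>" "\<bar>\<tau>\<bar> \<le> \<bar>r\<bar>"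
    "G (u+s) (p+r) - G (u+s) p - G u (p+r) + G u p = Gup (u+\<sigma>) (p+\<tau>) * s * r"
proof -
  have "((\<lambda>u. G u (p+r) - G u p) has_real_derivative Gu t (p+r) - Gu t p) (at t)" for t
    using assms(1) by (auto intro!: derivative_eq_intros)
  then obtain \<sigma> where \<sigma>: "\<bar>\<sigma>\<bar> \<le> \<bar>s\<bar>"
    "G (u+s) (p+r) - G (u+s) p = G u (p+r) - G u p + (Gu (u+\<sigma>) (p+r) - Gu (u+\<sigma>) p) * s"
    by (rule Maclaurin_1_bi_le)
  obtain \<tau> where "\<bar>\<tau>\<bar> \<le> \<bar>r\<bar>" "Gu (u+\<sigma>) (p+r) = Gu (u+\<sigma>) p + Gup (u+\<sigma>) (p+\<tau>) * r"
    using Maclaurin_1_bi_le[of "Gu (u+\<sigma>)"] assms(2) by metis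
  with \<sigma> that show ?thesis
    by (simp add: algebra_simps)
qed

lemma isCont_partial_oscillation:
  fixes g :: "real \<Rightarrow> real \<Rightarrow> real \<Rightarrow> real"
  assumes "isCont (\<lambda>(x,u,p). g x u p) (x,u,p)" "\<epsilon> > 0"
  obtains d where "d > 0" "\<And>\<sigma> \<tau>. \<bar>\<sigma>\<bar> \<le> d \<Longrightarrow> \<bar>\<tau>\<bar> \<le> d \<Longrightarrow> \<bar>g x (u+\<sigma>) (p+\<tau>) - g x u p\<bar> < \<epsilon>"
proof -
  obtain d where d: "d > 0" "\<And>y. dist y (x,u,p) < d \<Longrightarrow> dist ((\<lambda>(x,u,p). g x u p) y) (g x u p) < \<epsilon>"
    using assms unfolding continuous_at_eps_delta by fastforce
  have "dist (x, u+\<sigma>, p+\<tau>) (x,u,p) < d" if "\<bar>\<sigma>\<bar> \<le> d/3" "\<bar>\<tau>\<bar> \<le> d/3" for \<sigma> \<tau>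
    using sqrt_sum_squares_le_sum_abs[of \<sigma> \<tau>] that d(1) by (simp add: dist_Pair_Pair dist_real_def)
  with d show ?thesis
    by (intro that[of "d/3"]) (auto simp: dist_real_def)
qed

text \<open>Schwarz's theorem: both mixed differences equal the same second difference quotient,
  which tends to either mixed partial by their continuity.\<close>

lemma D2_D3_commute:
  assumes f: "Ck_on (Suc (Suc k)) U f" and "open U" and U: "\<And>u p. (x,u,p) \<in> U"
  shows "D2 (D3 f) x u p = D3 (D2 f) x u p"
proof (rule ccontr)
  define \<epsilon> where "\<epsilon> = \<bar>D2 (D3 f) x u p - D3 (D2 f) x u p\<bar> / 2"
  assume "D2 (D3 f) x u p \<noteq> D3 (D2 f) x u p"
  then have "\<epsilon> > 0" by (simp add: \<epsilon>_def)
  have f1: "Ck_on k U (D2 (D3 f))" "Ck_on k U (D3 (D2 f))"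
    using f by auto
  have "isCont (\<lambda>(x,u,p). D2 (D3 f) x u p) (x,u,p)" "isCont (\<lambda>(x,u,p). D3 (D2 f) x u p) (x,u,p)"
    using Ck_on_continuous[OF f1(1)] Ck_on_continuous[OF f1(2)] \<open>open U\<close> U
    by (auto simp: continuous_on_eq_continuous_at)
  then obtain d1 d2 where "d1 > 0" "d2 > 0"
    and d1: "\<And>\<sigma> \<tau>. \<bar>\<sigma>\<bar> \<le> d1 \<Longrightarrow> \<bar>\<tau>\<bar> \<le> d1 \<Longrightarrow> \<bar>D2 (D3 f) x (u+\<sigma>) (p+\<tau>) - D2 (D3 f) x u p\<bar> < \<epsilon>"
    and d2: "\<And>\<sigma> \<tau>. \<bar>\<sigma>\<bar> \<le> d2 \<Longrightarrow> \<bar>\<tau>\<bar> \<le> d2 \<Longrightarrow> \<bar>D3 (D2 f) x (u+\<sigma>) (p+\<tau>) - D3 (D2 f) x u p\<bar> < \<epsilon>"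
    using isCont_partial_oscillation \<open>\<epsilon> > 0\<close> by metis
  define s where "s = min d1 d2"
  have "s > 0" using \<open>d1 > 0\<close> \<open>d2 > 0\<close> by (simp add: s_def)
  define \<Delta> where "\<Delta> = f x (u+s) (p+s) - f x (u+s) p - f x u (p+s) + f x u p"
  obtain \<sigma>1 \<tau>1 where 1: "\<bar>\<sigma>1\<bar> \<le> s" "\<bar>\<tau>1\<bar> \<le> s" "\<Delta> = D3 (D2 f) x (u+\<sigma>1) (p+\<tau>1) * s * s"
    using second_difference_eq[of "f x" "D2 f x" "D3 (D2 f) x" s s u p]
      Ck_on_has_D2[OF f U] Ck_on_has_D3[of k U "D2 f", OF _ U] f \<open>s > 0\<close>
    unfolding \<Delta>_def by auto
  obtain \<tau>2 \<sigma>2 where 2: "\<bar>\<tau>2\<bar> \<le> s" "\<bar>\<sigma>2\<bar> \<le> s" "\<Delta> = D2 (D3 f) x (u+\<sigma>2) (p+\<tau>2) * s * s"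
    using second_difference_eq[of "\<lambda>p u. f x u p" "\<lambda>p u. D3 f x u p" "\<lambda>p u. D2 (D3 f) x u p" s s p u]
      Ck_on_has_D3[OF f U] Ck_on_has_D2[of k U "D3 f", OF _ U] f \<open>s > 0\<close>
    unfolding \<Delta>_def by (auto simp: algebra_simps)
  have "D3 (D2 f) x (u+\<sigma>1) (p+\<tau>1) = D2 (D3 f) x (u+\<sigma>2) (p+\<tau>2)"
    using 1(3) 2(3) \<open>s > 0\<close> by simp
  moreover have "\<bar>D3 (D2 f) x (u+\<sigma>1) (p+\<tau>1) - D3 (D2 f) x u p\<bar> < \<epsilon>"
    using 1 d2 by (simp add: s_def)
  moreover have "\<bar>D2 (D3 f) x (u+\<sigma>2) (p+\<tau>2) - D2 (D3 f) x u p\<bar> < \<epsilon>"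
    using 2 d1 by (simp add: s_def)
  ultimately have "\<bar>D2 (D3 f) x u p - D3 (D2 f) x u p\<bar> < 2 * \<epsilon>"
    by linarith
  then show False
    by (simp add: \<epsilon>_def)
qed

section \<open>The second variation\<close>

definition second_variation_density ::
  "real \<Rightarrow> real \<Rightarrow> (real \<Rightarrow> real \<Rightarrow> real \<Rightarrow> real) \<Rightarrow> (real \<Rightarrow> real) \<Rightarrow> (real \<Rightarrow> real) \<Rightarrow> real \<Rightarrow> real"
  where "second_variation_density a b f u0 \<eta> x =
    along a b (D3 (D3 f)) u0 x * (dv a b \<eta> x)\<^sup>2 + 2 * along a b (D2 (D3 f)) u0 x * \<eta> x * dv a b \<eta> x
    + along a b (D2 (D2 f)) u0 x * (\<eta> x)\<^sup>2"

definition second_variation ::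
  "real \<Rightarrow> real \<Rightarrow> (real \<Rightarrow> real \<Rightarrow> real \<Rightarrow> real) \<Rightarrow> (real \<Rightarrow> real) \<Rightarrow> (real \<Rightarrow> real) \<Rightarrow> real"
  where "second_variation a b f u0 \<eta> = integral {a..b} (second_variation_density a b f u0 \<eta>)"

definition H1_norm_sq :: "real \<Rightarrow> real \<Rightarrow> (real \<Rightarrow> real) \<Rightarrow> real"
  where "H1_norm_sq a b \<eta> = integral {a..b} (\<lambda>x. (\<eta> x)\<^sup>2 + (dv a b \<eta> x)\<^sup>2)"

lemma continuous_on_H1_density:
  "C1_on a b \<eta> \<Longrightarrow> continuous_on {a..b} (\<lambda>x. (\<eta> x)\<^sup>2 + (dv a b \<eta> x)\<^sup>2)"
  using C1_on_continuous C1_on_continuous_dv by (auto intro!: continuous_intros)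

lemma H1_norm_sq_nonneg: "C1_on a b \<eta> \<Longrightarrow> H1_norm_sq a b \<eta> \<ge> 0"
  unfolding H1_norm_sq_def
  by (rule integral_nonneg) (auto intro: integrable_continuous_interval continuous_on_H1_density)

lemma H1_norm_sq_pos:
  assumes "a < b" "C1_on a b \<eta>" "x \<in> {a..b}" "\<eta> x \<noteq> 0"
  shows "H1_norm_sq a b \<eta> > 0"
proof (rule ccontr)
  assume "\<not> H1_norm_sq a b \<eta> > 0"
  with H1_norm_sq_nonneg[OF assms(2)]
  have "((\<lambda>x. (\<eta> x)\<^sup>2 + (dv a b \<eta> x)\<^sup>2) has_integral 0) (cbox a b)"
    using integrable_continuous_interval[OF continuous_on_H1_density[OF assms(2)]]
    by (simp add: H1_norm_sq_def has_integral_integral)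
  then have "(\<eta> x)\<^sup>2 + (dv a b \<eta> x)\<^sup>2 = 0"
    by (rule has_integral_0_cbox_imp_0[rotated 2])
       (use continuous_on_H1_density[OF assms(2)] assms(1,3) in auto)
  with assms(4) show False by (simp add: add_nonneg_eq_0_iff)
qed

lemma H1_norm_sq_scale:
  "a < b \<Longrightarrow> C1_on a b \<eta> \<Longrightarrow> H1_norm_sq a b (\<lambda>x. \<tau> * \<eta> x) = \<tau>\<^sup>2 * H1_norm_sq a b \<eta>"
  unfolding H1_norm_sq_def
  by (subst integral_mult_right[symmetric], rule integral_cong)
     (simp add: dv_scale power2_eq_square algebra_simps)

lemma second_variation_scale:
  "a < b \<Longrightarrow> C1_on a b \<eta> \<Longrightarrow>
    second_variation a b f u0 (\<lambda>x. \<tau> * \<eta> x) = \<tau>\<^sup>2 * second_variation a b f u0 \<eta>"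
  unfolding second_variation_def
  by (subst integral_mult_right[symmetric], rule integral_cong)
     (simp add: second_variation_density_def dv_scale power2_eq_square algebra_simps)

locale variational_problem =
  fixes a b :: real and f :: "real \<Rightarrow> real \<Rightarrow> real \<Rightarrow> real" and u0 :: "real \<Rightarrow> real"
    and U :: "(real \<times> real \<times> real) set"
  assumes ab: "a < b" and open_U: "open U" and strip_U: "{a..b} \<times> UNIV \<times> UNIV \<subseteq> U"
    and f_C3: "Ck_on 3 U f" and u0_C1: "C1_on a b u0"
begin

abbreviation "fu0 \<equiv> along a b (D2 f) u0"
abbreviation "fp0 \<equiv> along a b (D3 f) u0"
abbreviation "fuu0 \<equiv> along a b (D2 (D2 f)) u0"
abbreviation "fup0 \<equiv> along a b (D3 (D2 f)) u0"
abbreviation "fpu0 \<equiv> along a b (D2 (D3 f)) u0"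
abbreviation "fpp0 \<equiv> along a b (D3 (D3 f)) u0"

lemma in_U: "x \<in> {a..b} \<Longrightarrow> (x, u, p) \<in> U"
  using strip_U by auto

lemma f_C3_Suc: "Ck_on (Suc (Suc (Suc 0))) U f"
  using f_C3 by (simp add: numeral_3_eq_3)

lemma continuous_on_partials:
  "continuous_on U (\<lambda>(x,u,p). f x u p)"
  "continuous_on U (\<lambda>(x,u,p). D2 f x u p)" "continuous_on U (\<lambda>(x,u,p). D3 f x u p)"
  "continuous_on U (\<lambda>(x,u,p). D2 (D2 f) x u p)" "continuous_on U (\<lambda>(x,u,p). D3 (D2 f) x u p)"
  "continuous_on U (\<lambda>(x,u,p). D2 (D3 f) x u p)" "continuous_on U (\<lambda>(x,u,p). D3 (D3 f) x u p)"
  using f_C3_Suc by (auto intro: Ck_on_continuous)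

lemma continuous_on_compose_strip:
  assumes "continuous_on U (\<lambda>(x,u,p). g x u p)" "continuous_on {a..b} v" "continuous_on {a..b} w"
  shows "continuous_on {a..b} (\<lambda>x. g x (v x) (w x))"
proof -
  have "continuous_on {a..b} (\<lambda>x. (\<lambda>(x,u,p). g x u p) (x, v x, w x))"
    using assms in_U by (intro continuous_on_compose2[OF assms(1)] continuous_intros) auto
  then show ?thesis by simp
qed

lemma continuous_on_along:
  "continuous_on U (\<lambda>(x,u,p). g x u p) \<Longrightarrow> continuous_on {a..b} (along a b g u0)"
  unfolding along_def
  by (rule continuous_on_compose_strip) (use u0_C1 C1_on_continuous C1_on_continuous_dv in auto)

lemma continuous_on_coefficients:
  "continuous_on {a..b} fu0" "continuous_on {a..b} fp0"
  "continuous_on {a..b} fuu0" "continuous_on {a..b} fup0"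
  "continuous_on {a..b} fpu0" "continuous_on {a..b} fpp0"
  using continuous_on_partials by (auto intro: continuous_on_along)

lemma fpu0_eq_fup0: "x \<in> {a..b} \<Longrightarrow> fpu0 x = fup0 x"
  unfolding along_def using D2_D3_commute[OF f_C3_Suc open_U in_U] by simp

lemma continuous_on_second_variation_density:
  "C1_on a b \<eta> \<Longrightarrow> continuous_on {a..b} (second_variation_density a b f u0 \<eta>)"
  unfolding second_variation_density_def
  using continuous_on_coefficients C1_on_continuous C1_on_continuous_dv
  by (auto intro!: continuous_intros)

lemma uniform_oscillation:
  fixes g :: "real \<Rightarrow> real \<Rightarrow> real \<Rightarrow> real"
  assumes "continuous_on U (\<lambda>(x,u,p). g x u p)" "\<epsilon> > 0"
  obtains d where "d > 0" "\<And>x u p \<sigma> \<tau>. x \<in> {a..b} \<Longrightarrow> \<bar>u\<bar> \<le> M \<Longrightarrow> \<bar>p\<bar> \<le> M \<Longrightarrow>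
      \<bar>\<sigma>\<bar> \<le> d \<Longrightarrow> \<bar>\<tau>\<bar> \<le> d \<Longrightarrow> \<bar>g x (u+\<sigma>) (p+\<tau>) - g x u p\<bar> \<le> \<epsilon>"
proof -
  define K where "K = {a..b} \<times> {-M-1..M+1} \<times> {-M-1..M+1}"
  have "compact K" "K \<subseteq> U"
    using in_U by (auto simp: K_def intro!: compact_Times)
  then have "uniformly_continuous_on K (\<lambda>(x,u,p). g x u p)"
    using assms(1) by (intro compact_uniformly_continuous) (auto intro: continuous_on_subset)
  then obtain d0 where "d0 > 0" and d0: "\<And>y y'. y \<in> K \<Longrightarrow> y' \<in> K \<Longrightarrow> dist y' y < d0 \<Longrightarrow>
      dist ((\<lambda>(x,u,p). g x u p) y') ((\<lambda>(x,u,p). g x u p) y) < \<epsilon>"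
    using assms(2) unfolding uniformly_continuous_on_def by metis
  show ?thesis
  proof (rule that[of "min 1 (d0 / 3)"])
    fix x u p \<sigma> \<tau>
    assume "x \<in> {a..b}" "\<bar>u\<bar> \<le> M" "\<bar>p\<bar> \<le> M" "\<bar>\<sigma>\<bar> \<le> min 1 (d0 / 3)" "\<bar>\<tau>\<bar> \<le> min 1 (d0 / 3)"
    moreover from this have "dist (x, u+\<sigma>, p+\<tau>) (x, u, p) < d0"
      using sqrt_sum_squares_le_sum_abs[of \<sigma> \<tau>] \<open>d0 > 0\<close>
      by (simp add: dist_Pair_Pair dist_real_def)
    ultimately show "\<bar>g x (u+\<sigma>) (p+\<tau>) - g x u p\<bar> \<le> \<epsilon>"
      using d0[of "(x, u, p)" "(x, u+\<sigma>, p+\<tau>)"] by (force simp: K_def dist_real_def abs_le_iff)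
  qed (use \<open>d0 > 0\<close> in auto)
qed

lemma taylor2_along_u0:
  assumes "\<epsilon> > 0"
  obtains \<delta> where "\<delta> > 0" "\<And>x e z. x \<in> {a..b} \<Longrightarrow> \<bar>e\<bar> \<le> \<delta> \<Longrightarrow> \<bar>z\<bar> \<le> \<delta> \<Longrightarrow>
    \<bar>f x (u0 x + e) (dv a b u0 x + z) - along a b f u0 x - (fu0 x * e + fp0 x * z)
      - (fpp0 x * z\<^sup>2 + 2 * fpu0 x * e * z + fuu0 x * e\<^sup>2) / 2\<bar> \<le> \<epsilon> * (e\<^sup>2 + z\<^sup>2)"
proof -
  obtain M0 M1 where "\<forall>x\<in>{a..b}. \<bar>u0 x\<bar> \<le> M0" "\<forall>x\<in>{a..b}. \<bar>dv a b u0 x\<bar> \<le> M1"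
    using abs_bounded_on_Icc C1_on_continuous[OF u0_C1] C1_on_continuous_dv[OF u0_C1] by metis
  define M where "M = max M0 M1"
  have M: "\<bar>u0 x\<bar> \<le> M" "\<bar>dv a b u0 x\<bar> \<le> M" if "x \<in> {a..b}" for x
    using that \<open>\<forall>x\<in>{a..b}. \<bar>u0 x\<bar> \<le> M0\<close> \<open>\<forall>x\<in>{a..b}. \<bar>dv a b u0 x\<bar> \<le> M1\<close>
    by (auto simp: M_def le_max_iff_disj)
  obtain d1 where "d1 > 0" and d1: "\<And>x u p \<sigma> \<tau>. x \<in> {a..b} \<Longrightarrow> \<bar>u\<bar> \<le> M \<Longrightarrow> \<bar>p\<bar> \<le> M \<Longrightarrow>
      \<bar>\<sigma>\<bar> \<le> d1 \<Longrightarrow> \<bar>\<tau>\<bar> \<le> d1 \<Longrightarrow> \<bar>D2 (D2 f) x (u+\<sigma>) (p+\<tau>) - D2 (D2 f) x u p\<bar> \<le> \<epsilon>"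
    using uniform_oscillation[OF continuous_on_partials(4) assms, where M=M] by blast
  obtain d2 where "d2 > 0" and d2: "\<And>x u p \<sigma> \<tau>. x \<in> {a..b} \<Longrightarrow> \<bar>u\<bar> \<le> M \<Longrightarrow> \<bar>p\<bar> \<le> M \<Longrightarrow>
      \<bar>\<sigma>\<bar> \<le> d2 \<Longrightarrow> \<bar>\<tau>\<bar> \<le> d2 \<Longrightarrow> \<bar>D2 (D3 f) x (u+\<sigma>) (p+\<tau>) - D2 (D3 f) x u p\<bar> \<le> \<epsilon>"
    using uniform_oscillation[OF continuous_on_partials(6) assms, where M=M] by blast
  obtain d3 where "d3 > 0" and d3: "\<And>x u p \<sigma> \<tau>. x \<in> {a..b} \<Longrightarrow> \<bar>u\<bar> \<le> M \<Longrightarrow> \<bar>p\<bar> \<le> M \<Longrightarrow>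
      \<bar>\<sigma>\<bar> \<le> d3 \<Longrightarrow> \<bar>\<tau>\<bar> \<le> d3 \<Longrightarrow> \<bar>D3 (D3 f) x (u+\<sigma>) (p+\<tau>) - D3 (D3 f) x u p\<bar> \<le> \<epsilon>"
    using uniform_oscillation[OF continuous_on_partials(7) assms, where M=M] by blast
  show ?thesis
  proof (rule that[of "min d1 (min d2 d3)"])
    fix x e z
    assume x: "x \<in> {a..b}" and e: "\<bar>e\<bar> \<le> min d1 (min d2 d3)" and z: "\<bar>z\<bar> \<le> min d1 (min d2 d3)"
    have "\<bar>f x (u0 x + e) (dv a b u0 x + z) - f x (u0 x) (dv a b u0 x)
          - (D2 f x (u0 x) (dv a b u0 x) * e + D3 f x (u0 x) (dv a b u0 x) * z)
          - (D3 (D3 f) x (u0 x) (dv a b u0 x) * z\<^sup>2 + 2 * D2 (D3 f) x (u0 x) (dv a b u0 x) * e * z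
             + D2 (D2 f) x (u0 x) (dv a b u0 x) * e\<^sup>2) / 2\<bar> \<le> \<epsilon> * (e\<^sup>2 + z\<^sup>2)"
    proof (rule taylor2_remainder_le[OF f_C3_Suc in_U[OF x]])
      show "\<bar>D2 (D2 f) x (u0 x + s) (dv a b u0 x) - D2 (D2 f) x (u0 x) (dv a b u0 x)\<bar> \<le> \<epsilon>"
        if "\<bar>s\<bar> \<le> \<bar>e\<bar>" for s
        using d1[OF x M[OF x], of s 0] that e \<open>d1 > 0\<close> by simp
      show "\<bar>D2 (D3 f) x (u0 x + s) (dv a b u0 x) - D2 (D3 f) x (u0 x) (dv a b u0 x)\<bar> \<le> \<epsilon>"
        if "\<bar>s\<bar> \<le> \<bar>e\<bar>" for s
        using d2[OF x M[OF x], of s 0] that e \<open>d2 > 0\<close> by simp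
      show "\<bar>D3 (D3 f) x (u0 x + e) (dv a b u0 x + t) - D3 (D3 f) x (u0 x) (dv a b u0 x)\<bar> \<le> \<epsilon>"
        if "\<bar>t\<bar> \<le> \<bar>z\<bar>" for t
        using d3[OF x M[OF x], of e t] that e z by simp
    qed
    then show "\<bar>f x (u0 x + e) (dv a b u0 x + z) - along a b f u0 x - (fu0 x * e + fp0 x * z)
      - (fpp0 x * z\<^sup>2 + 2 * fpu0 x * e * z + fuu0 x * e\<^sup>2) / 2\<bar> \<le> \<epsilon> * (e\<^sup>2 + z\<^sup>2)"
      by (simp add: along_def)
  qed (use \<open>d1 > 0\<close> \<open>d2 > 0\<close> \<open>d3 > 0\<close> in auto)
qed

end

locale natural_extremal = variational_problem +
  assumes extremal:
      "\<forall>x\<in>{a..b}. (fp0 has_real_derivative fu0 x) (at x within {a..b})"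
    and natural_a: "fp0 a = 0" and natural_b: "fp0 b = 0"
begin

lemma first_variation_eq_0:
  assumes "C1_on a b \<eta>"
  shows "integral {a..b} (\<lambda>x. fu0 x * \<eta> x + fp0 x * dv a b \<eta> x) = 0"
proof -
  have "((\<lambda>x. fu0 x * \<eta> x + fp0 x * dv a b \<eta> x) has_integral (fp0 b * \<eta> b - fp0 a * \<eta> a)) {a..b}"
  proof (rule fundamental_theorem_of_calculus[OF less_imp_le[OF ab]])
    fix x assume x: "x \<in> {a..b}"
    show "((\<lambda>x. fp0 x * \<eta> x) has_vector_derivative fu0 x * \<eta> x + fp0 x * dv a b \<eta> x)
        (at x within {a..b})"
      using DERIV_mult'[OF extremal[rule_format, OF x] C1_on_has_real_derivative[OF assms x]]
      by (simp add: has_real_derivative_iff_has_vector_derivative add.commute)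
  qed
  then show ?thesis
    using natural_a natural_b by (simp add: integral_unique)
qed

text \<open>The first variation \<open>\<integral> fu0 \<eta> + fp0 \<eta>'\<close> vanishes by the natural boundary
  conditions, so it can be subtracted from the increment for free.\<close>

lemma has_integral_Phi_increment:
  assumes \<eta>: "C1_on a b \<eta>"
  shows "((\<lambda>x. f x (u0 x + \<eta> x) (dv a b u0 x + dv a b \<eta> x) - along a b f u0 x
      - (fu0 x * \<eta> x + fp0 x * dv a b \<eta> x) - second_variation_density a b f u0 \<eta> x / 2)
    has_integral Phi a b f (\<lambda>x. u0 x + \<eta> x) - Phi a b f u0 - second_variation a b f u0 \<eta> / 2) {a..b}"
proof -
  define F where "F x = f x (u0 x + \<eta> x) (dv a b u0 x + dv a b \<eta> x)" for x
  define L where "L x = fu0 x * \<eta> x + fp0 x * dv a b \<eta> x" for x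
  have c: "continuous_on {a..b} u0" "continuous_on {a..b} (dv a b u0)"
    "continuous_on {a..b} \<eta>" "continuous_on {a..b} (dv a b \<eta>)"
    using u0_C1 \<eta> by (simp_all add: C1_on_continuous C1_on_continuous_dv)
  have "continuous_on {a..b} F"
    unfolding F_def using c
    by (intro continuous_on_compose_strip[OF continuous_on_partials(1)] continuous_intros)
  moreover have "continuous_on {a..b} L"
    unfolding L_def using c continuous_on_coefficients by (auto intro!: continuous_intros)
  ultimately have ints: "(F has_integral integral {a..b} F) {a..b}"
    "(along a b f u0 has_integral integral {a..b} (along a b f u0)) {a..b}"
    "(L has_integral integral {a..b} L) {a..b}"
    "(second_variation_density a b f u0 \<eta> has_integral second_variation a b f u0 \<eta>) {a..b}"
    using continuous_on_along[OF continuous_on_partials(1)]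
      continuous_on_second_variation_density[OF \<eta>]
    by (simp_all add: second_variation_def integrable_continuous_interval integrable_integral)
  have "((\<lambda>x. F x - along a b f u0 x - L x - second_variation_density a b f u0 \<eta> x / 2) has_integral
      integral {a..b} F - integral {a..b} (along a b f u0) - integral {a..b} L
        - second_variation a b f u0 \<eta> / 2) {a..b}"
    by (intro has_integral_diff has_integral_divide ints)
  moreover have "Phi a b f (\<lambda>x. u0 x + \<eta> x) = integral {a..b} F"
    unfolding Phi_def F_def by (rule integral_cong) (simp add: dv_add[OF ab _ u0_C1 \<eta>])
  moreover have "Phi a b f u0 = integral {a..b} (along a b f u0)"
    by (simp add: Phi_def along_def[abs_def])
  moreover have "integral {a..b} L = 0"
    unfolding L_def by (rule first_variation_eq_0[OF \<eta>])
  ultimately show ?thesis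
    by (simp add: F_def L_def)
qed

lemma Phi_taylor2:
  assumes "\<epsilon> > 0"
  obtains \<delta> where "\<delta> > 0" "\<And>\<eta>. C1_on a b \<eta> \<Longrightarrow> (\<forall>x\<in>{a..b}. \<bar>\<eta> x\<bar> \<le> \<delta> \<and> \<bar>dv a b \<eta> x\<bar> \<le> \<delta>) \<Longrightarrow>
    \<bar>Phi a b f (\<lambda>x. u0 x + \<eta> x) - Phi a b f u0 - second_variation a b f u0 \<eta> / 2\<bar>
      \<le> \<epsilon> * H1_norm_sq a b \<eta>"
proof -
  obtain \<delta> where "\<delta> > 0" and taylor: "\<And>x e z. x \<in> {a..b} \<Longrightarrow> \<bar>e\<bar> \<le> \<delta> \<Longrightarrow> \<bar>z\<bar> \<le> \<delta> \<Longrightarrow>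
    \<bar>f x (u0 x + e) (dv a b u0 x + z) - along a b f u0 x - (fu0 x * e + fp0 x * z)
      - (fpp0 x * z\<^sup>2 + 2 * fpu0 x * e * z + fuu0 x * e\<^sup>2) / 2\<bar> \<le> \<epsilon> * (e\<^sup>2 + z\<^sup>2)"
    using taylor2_along_u0[OF assms] by blast
  show ?thesis
  proof (rule that[OF \<open>\<delta> > 0\<close>])
    fix \<eta> assume \<eta>: "C1_on a b \<eta>" and small: "\<forall>x\<in>{a..b}. \<bar>\<eta> x\<bar> \<le> \<delta> \<and> \<bar>dv a b \<eta> x\<bar> \<le> \<delta>"
    define R where "R x = f x (u0 x + \<eta> x) (dv a b u0 x + dv a b \<eta> x) - along a b f u0 x
      - (fu0 x * \<eta> x + fp0 x * dv a b \<eta> x) - second_variation_density a b f u0 \<eta> x / 2" for x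
    have R: "(R has_integral Phi a b f (\<lambda>x. u0 x + \<eta> x) - Phi a b f u0 - second_variation a b f u0 \<eta> / 2) {a..b}"
      unfolding R_def by (rule has_integral_Phi_increment[OF \<eta>])
    have "norm (integral {a..b} R) \<le> integral {a..b} (\<lambda>x. \<epsilon> * ((\<eta> x)\<^sup>2 + (dv a b \<eta> x)\<^sup>2))"
    proof (rule integral_norm_bound_integral)
      show "R integrable_on {a..b}"
        using R by (rule has_integral_integrable)
      show "(\<lambda>x. \<epsilon> * ((\<eta> x)\<^sup>2 + (dv a b \<eta> x)\<^sup>2)) integrable_on {a..b}"
        using continuous_on_H1_density[OF \<eta>] by (intro integrable_on_mult_right integrable_continuous_interval)
      fix x assume x: "x \<in> {a..b}"
      have "\<bar>\<eta> x\<bar> \<le> \<delta>" "\<bar>dv a b \<eta> x\<bar> \<le> \<delta>"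
        using small x by auto
      with taylor[OF x] show "norm (R x) \<le> \<epsilon> * ((\<eta> x)\<^sup>2 + (dv a b \<eta> x)\<^sup>2)"
        by (simp only: R_def second_variation_density_def real_norm_def)
    qed
    then show "\<bar>Phi a b f (\<lambda>x. u0 x + \<eta> x) - Phi a b f u0 - second_variation a b f u0 \<eta> / 2\<bar>
        \<le> \<epsilon> * H1_norm_sq a b \<eta>"
      by (simp add: integral_unique[OF R] H1_norm_sq_def)
  qed
qed

lemma not_weak_minimizer_if_second_variation_neg:
  assumes \<eta>: "C1_on a b \<eta>" and neg: "second_variation a b f u0 \<eta> < 0"
  shows "\<not> weak_minimizer a b f u0"
proof
  assume "weak_minimizer a b f u0"
  then obtain \<epsilon> where "\<epsilon> > 0"
    and min: "\<And>v. C1_on a b v \<Longrightarrow> C1_norm a b (\<lambda>x. v x - u0 x) < \<epsilon> \<Longrightarrow> Phi a b f v \<ge> Phi a b f u0"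
    unfolding weak_minimizer_def by blast
  define Q where "Q = second_variation a b f u0 \<eta>"
  define E where "E = H1_norm_sq a b \<eta>"
  define \<epsilon>' where "\<epsilon>' = - Q / (4 * (E + 1))"
  have "E \<ge> 0" "Q < 0"
    using H1_norm_sq_nonneg[OF \<eta>] neg by (simp_all add: E_def Q_def)
  then have "\<epsilon>' > 0" and error: "\<epsilon>' * E \<le> - Q / 4"
    by (simp_all add: \<epsilon>'_def divide_simps)
  then obtain \<delta> where "\<delta> > 0" and taylor: "\<And>\<zeta>. C1_on a b \<zeta> \<Longrightarrow>
      (\<forall>x\<in>{a..b}. \<bar>\<zeta> x\<bar> \<le> \<delta> \<and> \<bar>dv a b \<zeta> x\<bar> \<le> \<delta>) \<Longrightarrow>
      \<bar>Phi a b f (\<lambda>x. u0 x + \<zeta> x) - Phi a b f u0 - second_variation a b f u0 \<zeta> / 2\<bar>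
        \<le> \<epsilon>' * H1_norm_sq a b \<zeta>"
    using Phi_taylor2 by blast
  obtain \<tau> where "\<tau> > 0" and small: "\<And>x. x \<in> {a..b} \<Longrightarrow>
      \<bar>\<tau> * \<eta> x\<bar> \<le> min \<delta> (\<epsilon> / 3) \<and> \<bar>dv a b (\<lambda>x. \<tau> * \<eta> x) x\<bar> \<le> min \<delta> (\<epsilon> / 3)"
    using C1_small_multiple[OF ab \<eta>, of "min \<delta> (\<epsilon> / 3)"] \<open>\<delta> > 0\<close> \<open>\<epsilon> > 0\<close> by auto
  have \<tau>\<eta>: "C1_on a b (\<lambda>x. \<tau> * \<eta> x)"
    using C1_on_mult[OF ab C1_on_const[OF ab] \<eta>] .
  have "C1_norm a b (\<lambda>x. (u0 x + \<tau> * \<eta> x) - u0 x) \<le> min \<delta> (\<epsilon> / 3) + min \<delta> (\<epsilon> / 3)"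
    using small by (intro C1_norm_le) (auto simp: less_imp_le[OF ab])
  then have "Phi a b f (\<lambda>x. u0 x + \<tau> * \<eta> x) \<ge> Phi a b f u0"
    using \<open>\<epsilon> > 0\<close> by (intro min C1_on_add[OF ab u0_C1 \<tau>\<eta>]) auto
  moreover have "\<bar>Phi a b f (\<lambda>x. u0 x + \<tau> * \<eta> x) - Phi a b f u0 - \<tau>\<^sup>2 * Q / 2\<bar> \<le> \<epsilon>' * (\<tau>\<^sup>2 * E)"
    using taylor[OF \<tau>\<eta>] small
    unfolding second_variation_scale[OF ab \<eta>] H1_norm_sq_scale[OF ab \<eta>] Q_def E_def by force
  moreover have "\<epsilon>' * (\<tau>\<^sup>2 * E) \<le> \<tau>\<^sup>2 * (- Q / 4)"
    using mult_left_mono[OF error, of "\<tau>\<^sup>2"] by (simp add: algebra_simps)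
  moreover have "\<tau>\<^sup>2 * Q < 0"
    using \<open>Q < 0\<close> \<open>\<tau> > 0\<close> by (simp add: mult_pos_neg)
  ultimately show False by linarith
qed

lemma strict_weak_minimizer_if_coercive:
  assumes "\<kappa> > 0"
    and coercive: "\<And>\<eta>. C1_on a b \<eta> \<Longrightarrow> second_variation a b f u0 \<eta> \<ge> \<kappa> * H1_norm_sq a b \<eta>"
  shows "strict_weak_minimizer a b f u0"
proof -
  obtain \<delta> where "\<delta> > 0" and taylor: "\<And>\<zeta>. C1_on a b \<zeta> \<Longrightarrow>
      (\<forall>x\<in>{a..b}. \<bar>\<zeta> x\<bar> \<le> \<delta> \<and> \<bar>dv a b \<zeta> x\<bar> \<le> \<delta>) \<Longrightarrow>
      \<bar>Phi a b f (\<lambda>x. u0 x + \<zeta> x) - Phi a b f u0 - second_variation a b f u0 \<zeta> / 2\<bar>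
        \<le> \<kappa> / 4 * H1_norm_sq a b \<zeta>"
    using Phi_taylor2[of "\<kappa> / 4"] \<open>\<kappa> > 0\<close> by auto
  have "Phi a b f v > Phi a b f u0"
    if v: "C1_on a b v" "C1_norm a b (\<lambda>x. v x - u0 x) < \<delta>" and "x \<in> {a..b}" "v x \<noteq> u0 x" for v x
  proof -
    define \<zeta> where "\<zeta> x = v x - u0 x" for x
    have \<zeta>: "C1_on a b \<zeta>"
      unfolding \<zeta>_def by (rule C1_on_diff[OF ab v(1) u0_C1])
    have "\<forall>x\<in>{a..b}. \<bar>\<zeta> x\<bar> \<le> \<delta> \<and> \<bar>dv a b \<zeta> x\<bar> \<le> \<delta>"
      using abs_le_C1_norm[OF \<zeta>] v(2) unfolding \<zeta>_def by fastforce
    moreover have "(\<lambda>x. u0 x + \<zeta> x) = v"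
      by (simp add: \<zeta>_def)
    ultimately have "\<bar>Phi a b f v - Phi a b f u0 - second_variation a b f u0 \<zeta> / 2\<bar>
        \<le> \<kappa> / 4 * H1_norm_sq a b \<zeta>"
      using taylor[OF \<zeta>] by metis
    then have "Phi a b f v - Phi a b f u0 \<ge> second_variation a b f u0 \<zeta> / 2 - \<kappa> / 4 * H1_norm_sq a b \<zeta>"
      by linarith
    moreover have "\<kappa> * H1_norm_sq a b \<zeta> > 0"
      using H1_norm_sq_pos[OF ab \<zeta>] that(3,4) \<open>\<kappa> > 0\<close> by (simp add: \<zeta>_def)
    ultimately show ?thesis
      using coercive[OF \<zeta>] by linarith
  qed
  then show ?thesis
    unfolding strict_weak_minimizer_def using \<open>\<delta> > 0\<close> by blast
qed

end

section \<open>Jacobi fields\<close>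

locale jacobi_field = variational_problem +
  fixes h :: "real \<Rightarrow> real" and c0 :: real
  assumes legendre: "c0 > 0" "\<forall>x\<in>{a..b}. fpp0 x \<ge> c0"
    and jacobi: "jacobi_solution a b f u0 h"
    and nontrivial: "\<exists>x\<in>{a..b}. h x \<noteq> 0"
    and Bh_a: "Bop a b f u0 h a = 0"
begin

abbreviation "Bh \<equiv> Bop a b f u0 h"
abbreviation "Ch \<equiv> Cop a b f u0 h"

lemma h_C1: "C1_on a b h"
  using jacobi by (simp add: jacobi_solution_def C2_on_def)

lemma Bh_has_real_derivative: "x \<in> {a..b} \<Longrightarrow> (Bh has_real_derivative Ch x) (at x within {a..b})"
  using jacobi by (simp add: jacobi_solution_def)

lemma jacobi_system_bound:
  obtains L where "L \<ge> 0" "\<And>t. t \<in> {a..b} \<Longrightarrow> \<bar>dv a b h t\<bar> + \<bar>Ch t\<bar> \<le> L * (\<bar>h t\<bar> + \<bar>Bh t\<bar>)"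
proof -
  obtain K1 K2 K3 where K1: "\<forall>t\<in>{a..b}. \<bar>fpu0 t\<bar> \<le> K1"
    and K2: "\<forall>t\<in>{a..b}. \<bar>fup0 t\<bar> \<le> K2" and K3: "\<forall>t\<in>{a..b}. \<bar>fuu0 t\<bar> \<le> K3"
    using abs_bounded_on_Icc continuous_on_coefficients(3-5) by metis
  define K where "K = max 0 (max K1 (max K2 K3))"
  have "K \<ge> 0" by (simp add: K_def)
  have K: "\<bar>fpu0 t\<bar> \<le> K" "\<bar>fup0 t\<bar> \<le> K" "\<bar>fuu0 t\<bar> \<le> K" if "t \<in> {a..b}" for t
    using K1 K2 K3 that by (auto simp: K_def le_max_iff_disj)
  define A where "A = (1 + K) / c0"
  have "A \<ge> 0"
    using \<open>K \<ge> 0\<close> legendre(1) by (simp add: A_def)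
  show ?thesis
  proof (rule that[of "(1 + K) * A + K"])
    show "(1 + K) * A + K \<ge> 0"
      using \<open>K \<ge> 0\<close> \<open>A \<ge> 0\<close> by simp
    fix t assume t: "t \<in> {a..b}"
    have "c0 \<le> fpp0 t" using legendre t by auto
    then have "c0 * \<bar>dv a b h t\<bar> \<le> \<bar>fpp0 t * dv a b h t\<bar>"
      using legendre(1) by (simp add: abs_mult mult_right_mono)
    also have "\<dots> = \<bar>Bh t - fpu0 t * h t\<bar>"
      by (simp add: Bop_def)
    also have "\<dots> \<le> \<bar>Bh t\<bar> + K * \<bar>h t\<bar>"
      using abs_triangle_ineq4[of "Bh t" "fpu0 t * h t"] mult_right_mono[OF K(1)[OF t], of "\<bar>h t\<bar>"]
      by (simp add: abs_mult)
    also have "\<dots> \<le> (1 + K) * (\<bar>h t\<bar> + \<bar>Bh t\<bar>)"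
      using \<open>K \<ge> 0\<close> by (simp add: algebra_simps)
    finally have h': "\<bar>dv a b h t\<bar> \<le> A * (\<bar>h t\<bar> + \<bar>Bh t\<bar>)"
      using legendre(1) by (simp add: A_def field_simps mult.commute)
    have "\<bar>Ch t\<bar> \<le> K * \<bar>dv a b h t\<bar> + K * \<bar>h t\<bar>"
      unfolding Cop_def using abs_triangle_ineq[of "fup0 t * dv a b h t" "fuu0 t * h t"]
        mult_right_mono[OF K(2)[OF t], of "\<bar>dv a b h t\<bar>"] mult_right_mono[OF K(3)[OF t], of "\<bar>h t\<bar>"]
      by (simp add: abs_mult)
    moreover have "0 \<le> K * \<bar>Bh t\<bar>"
      using \<open>K \<ge> 0\<close> by simp
    ultimately have "\<bar>dv a b h t\<bar> + \<bar>Ch t\<bar> \<le> (1 + K) * \<bar>dv a b h t\<bar> + K * (\<bar>h t\<bar> + \<bar>Bh t\<bar>)"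
      by (simp add: algebra_simps)
    also have "\<dots> \<le> (1 + K) * (A * (\<bar>h t\<bar> + \<bar>Bh t\<bar>)) + K * (\<bar>h t\<bar> + \<bar>Bh t\<bar>)"
      using h' \<open>K \<ge> 0\<close> by (simp add: mult_left_mono)
    finally show "\<bar>dv a b h t\<bar> + \<bar>Ch t\<bar> \<le> ((1 + K) * A + K) * (\<bar>h t\<bar> + \<bar>Bh t\<bar>)"
      by (simp add: algebra_simps)
  qed
qed

text \<open>Uniqueness for the Jacobi equation, written as a first-order system for \<open>(h, Bh)\<close>:
  this is where the Legendre condition \<open>fpp0 \<ge> c0 > 0\<close> enters.\<close>

lemma jacobi_zero_data_imp_zero:
  assumes "y \<in> {a..b}" "h y = 0" "Bh y = 0" "x \<in> {a..b}"
  shows "h x = 0"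
proof -
  obtain L where "L \<ge> 0" and L: "\<And>t. t \<in> {a..b} \<Longrightarrow> \<bar>dv a b h t\<bar> + \<bar>Ch t\<bar> \<le> L * (\<bar>h t\<bar> + \<bar>Bh t\<bar>)"
    using jacobi_system_bound by blast
  define E where "E t = (h t)\<^sup>2 + (Bh t)\<^sup>2" for t
  have "E x = 0"
  proof (rule gronwall_zero[where E = E and E' = "\<lambda>t. 2 * h t * dv a b h t + 2 * Bh t * Ch t"
        and L = "4 * L" and a = a and b = b and x = x and y = y])
    fix t assume t: "t \<in> {a..b}"
    show "(E has_real_derivative 2 * h t * dv a b h t + 2 * Bh t * Ch t) (at t within {a..b})"
      unfolding E_def using C1_on_has_real_derivative[OF h_C1 t] Bh_has_real_derivative[OF t]
      by (auto intro!: derivative_eq_intros)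
    have "\<bar>2 * h t * dv a b h t + 2 * Bh t * Ch t\<bar> \<le> 2 * (\<bar>h t\<bar> * \<bar>dv a b h t\<bar>) + 2 * (\<bar>Bh t\<bar> * \<bar>Ch t\<bar>)"
      using abs_triangle_ineq[of "2 * h t * dv a b h t" "2 * Bh t * Ch t"] by (simp add: abs_mult)
    moreover have "0 \<le> \<bar>h t\<bar> * \<bar>Ch t\<bar>" "0 \<le> \<bar>Bh t\<bar> * \<bar>dv a b h t\<bar>"
      by simp_all
    moreover have "2 * (\<bar>h t\<bar> + \<bar>Bh t\<bar>) * (\<bar>dv a b h t\<bar> + \<bar>Ch t\<bar>) = 2 * (\<bar>h t\<bar> * \<bar>dv a b h t\<bar>)
        + 2 * (\<bar>Bh t\<bar> * \<bar>Ch t\<bar>) + 2 * (\<bar>h t\<bar> * \<bar>Ch t\<bar>) + 2 * (\<bar>Bh t\<bar> * \<bar>dv a b h t\<bar>)"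
      by (simp add: algebra_simps)
    ultimately have "\<bar>2 * h t * dv a b h t + 2 * Bh t * Ch t\<bar>
        \<le> 2 * (\<bar>h t\<bar> + \<bar>Bh t\<bar>) * (\<bar>dv a b h t\<bar> + \<bar>Ch t\<bar>)"
      by linarith
    also have "\<dots> \<le> 2 * (\<bar>h t\<bar> + \<bar>Bh t\<bar>) * (L * (\<bar>h t\<bar> + \<bar>Bh t\<bar>))"
      using L[OF t] by (intro mult_left_mono) auto
    also have "\<dots> \<le> 4 * L * E t"
    proof -
      have "(\<bar>h t\<bar> + \<bar>Bh t\<bar>)\<^sup>2 \<le> 2 * E t"
        using sum_squares_bound[of "\<bar>h t\<bar>" "\<bar>Bh t\<bar>"] by (simp add: E_def power2_eq_square algebra_simps)
      then have "2 * L * (\<bar>h t\<bar> + \<bar>Bh t\<bar>)\<^sup>2 \<le> 2 * L * (2 * E t)"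
        using \<open>L \<ge> 0\<close> by (intro mult_left_mono) auto
      then show ?thesis
        by (simp add: power2_eq_square algebra_simps)
    qed
    finally show "\<bar>2 * h t * dv a b h t + 2 * Bh t * Ch t\<bar> \<le> 4 * L * E t" .
    show "E t \<ge> 0" by (simp add: E_def)
  qed (use assms in \<open>auto simp: E_def\<close>)
  then show ?thesis by (simp add: E_def)
qed

text \<open>Picone's identity. There are no boundary terms at \<open>a\<close> because \<open>Bh a = 0\<close>.\<close>

lemma second_variation_picone:
  assumes \<zeta>: "C1_on a b \<zeta>" and \<eta>: "C1_on a b \<eta>" and \<eta>_eq: "\<forall>x\<in>{a..b}. \<eta> x = h x * \<zeta> x + s"
  shows "second_variation a b f u0 \<eta> = (\<zeta> b)\<^sup>2 * h b * Bh b
    + integral {a..b} (\<lambda>x. fpp0 x * (h x)\<^sup>2 * (dv a b \<zeta> x)\<^sup>2)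
    + 2 * s * (\<zeta> b * Bh b - integral {a..b} (\<lambda>x. dv a b \<zeta> x * fpp0 x * dv a b h x))
    + s\<^sup>2 * integral {a..b} fuu0"
proof -
  note h' = C1_on_has_real_derivative[OF h_C1] and \<zeta>' = C1_on_has_real_derivative[OF \<zeta>]
  define W1 where "W1 x = fpp0 x * (h x)\<^sup>2 * (dv a b \<zeta> x)\<^sup>2" for x
  define W2 where "W2 x = dv a b \<zeta> x * fpp0 x * dv a b h x" for x
  define V1' where "V1' x = 2 * \<zeta> x * dv a b \<zeta> x * h x * Bh x + (\<zeta> x)\<^sup>2 * dv a b h x * Bh x
    + (\<zeta> x)\<^sup>2 * h x * Ch x" for x
  define V2' where "V2' x = dv a b \<zeta> x * Bh x + \<zeta> x * Ch x" for x
  have V1: "(V1' has_integral (\<zeta> b)\<^sup>2 * h b * Bh b - (\<zeta> a)\<^sup>2 * h a * Bh a) {a..b}"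
    by (rule fundamental_theorem_of_calculus[OF less_imp_le[OF ab]])
       (use h' \<zeta>' Bh_has_real_derivative in \<open>auto simp: V1'_def has_real_derivative_iff_has_vector_derivative[symmetric]
          power2_eq_square algebra_simps intro!: derivative_eq_intros\<close>)
  have V2: "(V2' has_integral \<zeta> b * Bh b - \<zeta> a * Bh a) {a..b}"
    by (rule fundamental_theorem_of_calculus[OF less_imp_le[OF ab]])
       (use \<zeta>' Bh_has_real_derivative in \<open>auto simp: V2'_def has_real_derivative_iff_has_vector_derivative[symmetric]
          algebra_simps intro!: derivative_eq_intros\<close>)
  have W: "(W1 has_integral integral {a..b} W1) {a..b}" "(W2 has_integral integral {a..b} W2) {a..b}"
    "(fuu0 has_integral integral {a..b} fuu0) {a..b}"
    unfolding W1_def W2_def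
    using continuous_on_coefficients C1_on_continuous[OF h_C1] C1_on_continuous_dv[OF h_C1]
      C1_on_continuous_dv[OF \<zeta>]
    by (auto intro!: integrable_integral integrable_continuous_interval continuous_intros)
  have "dv a b \<eta> x = dv a b h x * \<zeta> x + h x * dv a b \<zeta> x" if "x \<in> {a..b}" for x
    by (rule dv_eqI_on[OF ab that \<eta>_eq]) (use h' \<zeta>' that in \<open>auto intro!: derivative_eq_intros\<close>)
  then have density: "second_variation_density a b f u0 \<eta> x
      = V1' x + W1 x + 2 * s * (V2' x - W2 x) + s\<^sup>2 * fuu0 x" if "x \<in> {a..b}" for x
    using that \<eta>_eq fpu0_eq_fup0[OF that]
    by (simp add: second_variation_density_def V1'_def V2'_def W1_def W2_def Bop_def Cop_def
        power2_eq_square algebra_simps)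
  have "((\<lambda>x. V1' x + W1 x + 2 * s * (V2' x - W2 x) + s\<^sup>2 * fuu0 x) has_integral
      ((\<zeta> b)\<^sup>2 * h b * Bh b - (\<zeta> a)\<^sup>2 * h a * Bh a) + integral {a..b} W1
      + 2 * s * ((\<zeta> b * Bh b - \<zeta> a * Bh a) - integral {a..b} W2) + s\<^sup>2 * integral {a..b} fuu0) {a..b}"
    by (intro has_integral_add has_integral_mult_right has_integral_diff V1 V2 W)
  then have "(second_variation_density a b f u0 \<eta> has_integral
      (\<zeta> b)\<^sup>2 * h b * Bh b + integral {a..b} W1
      + 2 * s * (\<zeta> b * Bh b - integral {a..b} W2) + s\<^sup>2 * integral {a..b} fuu0) {a..b}"
    by (subst has_integral_cong[OF density]) (simp_all add: Bh_a)
  then show ?thesis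
    unfolding second_variation_def W1_def[abs_def] W2_def[abs_def] by (rule integral_unique)
qed

lemma second_variation_jacobi_field: "second_variation a b f u0 h = h b * Bh b"
proof -
  have "integral {a..b} (\<lambda>x. fpp0 x * (h x)\<^sup>2 * (dv a b (\<lambda>x. 1) x)\<^sup>2) = integral {a..b} (\<lambda>x. 0)"
    by (rule integral_cong) (simp add: dv_eqI[OF ab _ DERIV_const])
  then show ?thesis
    using second_variation_picone[OF C1_on_const[OF ab, of 1] h_C1, where s = 0] by simp
qed

lemma jacobi_nonvanishing:
  assumes "\<forall>y\<in>{a<..b}. h y \<noteq> 0"
  shows "\<forall>x\<in>{a..b}. h x \<noteq> 0"
proof -
  have "h a \<noteq> 0"
    using jacobi_zero_data_imp_zero[of a] Bh_a nontrivial ab by auto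
  with assms show ?thesis
    by (metis atLeastAtMost_iff greaterThanAtMost_iff order_less_le)
qed

lemma H1_density_le_quotient:
  obtains A B where "A \<ge> 0" "B \<ge> 0" "\<And>\<eta> \<zeta> x. C1_on a b \<zeta> \<Longrightarrow> \<forall>x\<in>{a..b}. \<eta> x = h x * \<zeta> x \<Longrightarrow>
    x \<in> {a..b} \<Longrightarrow> (\<eta> x)\<^sup>2 + (dv a b \<eta> x)\<^sup>2 \<le> A * (\<zeta> x)\<^sup>2 + B * (dv a b \<zeta> x)\<^sup>2"
proof -
  obtain H0 H1 where H0: "\<forall>x\<in>{a..b}. \<bar>h x\<bar> \<le> H0" and H1: "\<forall>x\<in>{a..b}. \<bar>dv a b h x\<bar> \<le> H1"
    using abs_bounded_on_Icc C1_on_continuous[OF h_C1] C1_on_continuous_dv[OF h_C1] by metis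
  show ?thesis
  proof (rule that[of "H0\<^sup>2 + 2 * H1\<^sup>2" "2 * H0\<^sup>2"])
    fix \<eta> \<zeta> x assume \<zeta>: "C1_on a b \<zeta>" and \<eta>_eq: "\<forall>x\<in>{a..b}. \<eta> x = h x * \<zeta> x" and x: "x \<in> {a..b}"
    have dv\<eta>: "dv a b \<eta> x = dv a b h x * \<zeta> x + h x * dv a b \<zeta> x"
      by (rule dv_eqI_on[OF ab x \<eta>_eq])
         (use C1_on_has_real_derivative[OF h_C1 x] C1_on_has_real_derivative[OF \<zeta> x] in
           \<open>auto intro!: derivative_eq_intros\<close>)
    have h2: "(h x)\<^sup>2 \<le> H0\<^sup>2" "(dv a b h x)\<^sup>2 \<le> H1\<^sup>2"
      using power_mono[OF _ abs_ge_zero, of "h x" H0 2] power_mono[OF _ abs_ge_zero, of "dv a b h x" H1 2]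
        H0 H1 x by simp_all
    have sq: "(p + q)\<^sup>2 \<le> 2 * p\<^sup>2 + 2 * q\<^sup>2" for p q :: real
      using sum_squares_bound[of p q] by (simp add: power2_eq_square algebra_simps)
    have "(dv a b \<eta> x)\<^sup>2 \<le> 2 * ((dv a b h x)\<^sup>2 * (\<zeta> x)\<^sup>2) + 2 * ((h x)\<^sup>2 * (dv a b \<zeta> x)\<^sup>2)"
      using sq[of "dv a b h x * \<zeta> x" "h x * dv a b \<zeta> x"] unfolding dv\<eta> by (simp add: power_mult_distrib)
    also have "\<dots> \<le> 2 * (H1\<^sup>2 * (\<zeta> x)\<^sup>2) + 2 * (H0\<^sup>2 * (dv a b \<zeta> x)\<^sup>2)"
      using h2 by (intro add_mono mult_left_mono mult_right_mono) auto
    finally have "(dv a b \<eta> x)\<^sup>2 \<le> 2 * (H1\<^sup>2 * (\<zeta> x)\<^sup>2) + 2 * (H0\<^sup>2 * (dv a b \<zeta> x)\<^sup>2)" .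
    moreover have "(\<eta> x)\<^sup>2 \<le> H0\<^sup>2 * (\<zeta> x)\<^sup>2"
      using \<eta>_eq x mult_right_mono[OF h2(1), of "(\<zeta> x)\<^sup>2"] by (simp add: power_mult_distrib)
    ultimately show "(\<eta> x)\<^sup>2 + (dv a b \<eta> x)\<^sup>2 \<le> (H0\<^sup>2 + 2 * H1\<^sup>2) * (\<zeta> x)\<^sup>2 + 2 * H0\<^sup>2 * (dv a b \<zeta> x)\<^sup>2"
      by (simp add: algebra_simps)
  qed simp_all
qed

lemma H1_norm_sq_le_quotient:
  obtains C where "C > 0" "\<And>\<eta> \<zeta>. C1_on a b \<zeta> \<Longrightarrow> C1_on a b \<eta> \<Longrightarrow> \<forall>x\<in>{a..b}. \<eta> x = h x * \<zeta> x \<Longrightarrow>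
    H1_norm_sq a b \<eta> \<le> C * ((\<zeta> b)\<^sup>2 + integral {a..b} (\<lambda>x. (dv a b \<zeta> x)\<^sup>2))"
proof -
  obtain A B where "A \<ge> 0" "B \<ge> 0" and pointwise: "\<And>\<eta> \<zeta> x. C1_on a b \<zeta> \<Longrightarrow> \<forall>x\<in>{a..b}. \<eta> x = h x * \<zeta> x \<Longrightarrow>
      x \<in> {a..b} \<Longrightarrow> (\<eta> x)\<^sup>2 + (dv a b \<eta> x)\<^sup>2 \<le> A * (\<zeta> x)\<^sup>2 + B * (dv a b \<zeta> x)\<^sup>2"
    using H1_density_le_quotient by blast
  define D where "D = 2 * (b - a) + 4 * (b - a)\<^sup>2"
  have "D \<ge> 0"
    using ab by (simp add: D_def)
  show ?thesis
  proof (rule that[of "A * D + B + 1"])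
    show "A * D + B + 1 > 0"
      using \<open>A \<ge> 0\<close> \<open>B \<ge> 0\<close> \<open>D \<ge> 0\<close> by (simp add: add_nonneg_pos)
    fix \<eta> \<zeta> assume \<zeta>: "C1_on a b \<zeta>" and \<eta>: "C1_on a b \<eta>" and \<eta>_eq: "\<forall>x\<in>{a..b}. \<eta> x = h x * \<zeta> x"
    define X where "X = (\<zeta> b)\<^sup>2"
    define Y where "Y = integral {a..b} (\<lambda>x. (dv a b \<zeta> x)\<^sup>2)"
    define Z where "Z = integral {a..b} (\<lambda>x. (\<zeta> x)\<^sup>2)"
    have int: "(\<lambda>x. (\<zeta> x)\<^sup>2) integrable_on {a..b}" "(\<lambda>x. (dv a b \<zeta> x)\<^sup>2) integrable_on {a..b}"
      using C1_on_continuous[OF \<zeta>] C1_on_continuous_dv[OF \<zeta>]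
      by (auto intro!: integrable_continuous_interval continuous_intros)
    have "X \<ge> 0" "Y \<ge> 0"
      unfolding X_def Y_def by (auto intro: integral_nonneg[OF int(2)])
    have "H1_norm_sq a b \<eta> \<le> integral {a..b} (\<lambda>x. A * (\<zeta> x)\<^sup>2 + B * (dv a b \<zeta> x)\<^sup>2)"
      unfolding H1_norm_sq_def
    proof (rule integral_le)
      show "(\<lambda>x. (\<eta> x)\<^sup>2 + (dv a b \<eta> x)\<^sup>2) integrable_on {a..b}"
        by (rule integrable_continuous_interval[OF continuous_on_H1_density[OF \<eta>]])
      show "(\<lambda>x. A * (\<zeta> x)\<^sup>2 + B * (dv a b \<zeta> x)\<^sup>2) integrable_on {a..b}"
        using int by (intro integrable_add integrable_on_mult_right)
    qed (rule pointwise[OF \<zeta> \<eta>_eq])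
    also have "\<dots> = A * Z + B * Y"
      using int by (simp add: Z_def Y_def integral_add integrable_on_mult_right)
    also have "\<dots> \<le> A * (D * X + D * Y) + B * (X + Y)"
    proof (intro add_mono mult_left_mono)
      have "Z \<le> 2 * (b - a) * X + 4 * (b - a)\<^sup>2 * Y"
        using friedrichs_inequality[OF ab \<zeta>] by (simp add: X_def Y_def Z_def)
      also have "\<dots> \<le> D * X + D * Y"
      proof -
        have "2 * (b - a) \<le> D" "4 * (b - a)\<^sup>2 \<le> D"
          using ab by (simp_all add: D_def)
        with \<open>X \<ge> 0\<close> \<open>Y \<ge> 0\<close> show ?thesis
          by (intro add_mono mult_right_mono)
      qed
      finally show "Z \<le> D * X + D * Y" .
    qed (use \<open>A \<ge> 0\<close> \<open>B \<ge> 0\<close> \<open>X \<ge> 0\<close> in auto)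
    also have "\<dots> \<le> (A * D + B + 1) * (X + Y)"
      using \<open>X \<ge> 0\<close> \<open>Y \<ge> 0\<close> by (simp add: algebra_simps)
    finally show "H1_norm_sq a b \<eta> \<le> (A * D + B + 1) * ((\<zeta> b)\<^sup>2 + integral {a..b} (\<lambda>x. (dv a b \<zeta> x)\<^sup>2))"
      by (simp add: X_def Y_def)
  qed
qed

lemma second_variation_ge_quotient:
  assumes nonzero: "\<forall>x\<in>{a..b}. h x \<noteq> 0" and pos: "Bh b * h b > 0"
  obtains \<mu> where "\<mu> > 0" "\<And>\<eta> \<zeta>. C1_on a b \<zeta> \<Longrightarrow> C1_on a b \<eta> \<Longrightarrow> \<forall>x\<in>{a..b}. \<eta> x = h x * \<zeta> x \<Longrightarrow>
    \<mu> * ((\<zeta> b)\<^sup>2 + integral {a..b} (\<lambda>x. (dv a b \<zeta> x)\<^sup>2)) \<le> second_variation a b f u0 \<eta>"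
proof -
  obtain xm where "xm \<in> {a..b}" and xm: "\<forall>y\<in>{a..b}. \<bar>h xm\<bar> \<le> \<bar>h y\<bar>"
    using continuous_attains_inf[OF compact_Icc _ continuous_on_rabs[OF C1_on_continuous[OF h_C1]]] ab
    by auto
  define m where "m = \<bar>h xm\<bar>"
  have "m > 0"
    using nonzero \<open>xm \<in> {a..b}\<close> by (simp add: m_def)
  define \<mu> where "\<mu> = min (Bh b * h b) (c0 * m\<^sup>2)"
  show ?thesis
  proof (rule that[of \<mu>])
    show "\<mu> > 0"
      using pos legendre(1) \<open>m > 0\<close> by (simp add: \<mu>_def)
    fix \<eta> \<zeta> assume \<zeta>: "C1_on a b \<zeta>" and \<eta>: "C1_on a b \<eta>" and \<eta>_eq: "\<forall>x\<in>{a..b}. \<eta> x = h x * \<zeta> x"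
    define Y where "Y = integral {a..b} (\<lambda>x. (dv a b \<zeta> x)\<^sup>2)"
    have int: "(\<lambda>x. (dv a b \<zeta> x)\<^sup>2) integrable_on {a..b}"
      "(\<lambda>x. fpp0 x * (h x)\<^sup>2 * (dv a b \<zeta> x)\<^sup>2) integrable_on {a..b}"
      using C1_on_continuous[OF h_C1] C1_on_continuous_dv[OF \<zeta>] continuous_on_coefficients
      by (auto intro!: integrable_continuous_interval continuous_intros)
    have "Y \<ge> 0"
      unfolding Y_def by (rule integral_nonneg[OF int(1)]) simp
    have "c0 * m\<^sup>2 * Y \<le> integral {a..b} (\<lambda>x. fpp0 x * (h x)\<^sup>2 * (dv a b \<zeta> x)\<^sup>2)"
      unfolding Y_def integral_mult_right[symmetric]
    proof (rule integral_le[OF integrable_on_mult_right[OF int(1)] int(2)])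
      fix x assume x: "x \<in> {a..b}"
      have "m\<^sup>2 \<le> (h x)\<^sup>2"
        using xm x \<open>m > 0\<close> by (simp add: m_def abs_le_square_iff)
      moreover have "c0 \<le> fpp0 x"
        using legendre(2) x by blast
      ultimately have "c0 * m\<^sup>2 \<le> fpp0 x * (h x)\<^sup>2"
        using legendre(1) by (intro mult_mono) auto
      then show "c0 * m\<^sup>2 * (dv a b \<zeta> x)\<^sup>2 \<le> fpp0 x * (h x)\<^sup>2 * (dv a b \<zeta> x)\<^sup>2"
        by (rule mult_right_mono) simp
    qed
    moreover have "second_variation a b f u0 \<eta>
        = (\<zeta> b)\<^sup>2 * (Bh b * h b) + integral {a..b} (\<lambda>x. fpp0 x * (h x)\<^sup>2 * (dv a b \<zeta> x)\<^sup>2)"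
      using second_variation_picone[OF \<zeta> \<eta>, where s = 0] \<eta>_eq by (simp add: algebra_simps)
    moreover have "\<mu> * (\<zeta> b)\<^sup>2 \<le> Bh b * h b * (\<zeta> b)\<^sup>2" "\<mu> * Y \<le> c0 * m\<^sup>2 * Y"
      using \<open>Y \<ge> 0\<close> by (auto simp: \<mu>_def intro!: mult_right_mono)
    ultimately show "\<mu> * ((\<zeta> b)\<^sup>2 + integral {a..b} (\<lambda>x. (dv a b \<zeta> x)\<^sup>2)) \<le> second_variation a b f u0 \<eta>"
      by (simp add: Y_def algebra_simps)
  qed
qed

lemma second_variation_coercive:
  assumes "\<forall>x\<in>{a..b}. h x \<noteq> 0" "Bh b * h b > 0"
  obtains \<kappa> where "\<kappa> > 0" "\<And>\<eta>. C1_on a b \<eta> \<Longrightarrow> \<kappa> * H1_norm_sq a b \<eta> \<le> second_variation a b f u0 \<eta>"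
proof -
  obtain C where "C > 0" and upper: "\<And>\<eta> \<zeta>. C1_on a b \<zeta> \<Longrightarrow> C1_on a b \<eta> \<Longrightarrow> \<forall>x\<in>{a..b}. \<eta> x = h x * \<zeta> x \<Longrightarrow>
      H1_norm_sq a b \<eta> \<le> C * ((\<zeta> b)\<^sup>2 + integral {a..b} (\<lambda>x. (dv a b \<zeta> x)\<^sup>2))"
    using H1_norm_sq_le_quotient by blast
  obtain \<mu> where "\<mu> > 0" and lower: "\<And>\<eta> \<zeta>. C1_on a b \<zeta> \<Longrightarrow> C1_on a b \<eta> \<Longrightarrow> \<forall>x\<in>{a..b}. \<eta> x = h x * \<zeta> x \<Longrightarrow>
      \<mu> * ((\<zeta> b)\<^sup>2 + integral {a..b} (\<lambda>x. (dv a b \<zeta> x)\<^sup>2)) \<le> second_variation a b f u0 \<eta>"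
    using second_variation_ge_quotient[OF assms] by blast
  show ?thesis
  proof (rule that[of "\<mu> / C"])
    show "\<mu> / C > 0"
      using \<open>\<mu> > 0\<close> \<open>C > 0\<close> by simp
    fix \<eta> assume \<eta>: "C1_on a b \<eta>"
    have \<zeta>: "C1_on a b (\<lambda>x. \<eta> x / h x)" and \<eta>_eq: "\<forall>x\<in>{a..b}. \<eta> x = h x * (\<eta> x / h x)"
      using C1_on_divide[OF ab \<eta> h_C1] assms(1) by auto
    have "\<mu> / C * H1_norm_sq a b \<eta> \<le> \<mu> / C * (C * ((\<eta> b / h b)\<^sup>2 + integral {a..b} (\<lambda>x. (dv a b (\<lambda>x. \<eta> x / h x) x)\<^sup>2)))"
      using upper[OF \<zeta> \<eta> \<eta>_eq] \<open>\<mu> > 0\<close> \<open>C > 0\<close> by (intro mult_left_mono) auto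
    also have "\<dots> \<le> second_variation a b f u0 \<eta>"
      using lower[OF \<zeta> \<eta> \<eta>_eq] \<open>C > 0\<close> by simp
    finally show "\<mu> / C * H1_norm_sq a b \<eta> \<le> second_variation a b f u0 \<eta>" .
  qed
qed

text \<open>Near the zero \<open>y\<close> of \<open>h\<close> we have \<open>\<bar>h\<bar> = O(\<delta>)\<close> on the support of the cutoff,
  whose slope is \<open>O(1/\<delta>)\<close>.\<close>

lemma picone_density_cutoff_le:
  assumes "y \<in> {a..b}" "h y = 0"
  obtains C where "\<And>\<delta> x. 0 < \<delta> \<Longrightarrow> x \<in> {a..b} \<Longrightarrow>
    \<bar>fpp0 x * (h x)\<^sup>2 * (dv a b (cutoff y \<delta>) x)\<^sup>2\<bar> \<le> C * \<delta> * cutoff_density y \<delta> x"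
proof -
  obtain P H where P: "\<forall>x\<in>{a..b}. \<bar>fpp0 x\<bar> \<le> P" and H: "\<forall>x\<in>{a..b}. \<bar>dv a b h x\<bar> \<le> H"
    using abs_bounded_on_Icc continuous_on_coefficients(6) C1_on_continuous_dv[OF h_C1] by metis
  show ?thesis
  proof (rule that[of "3 / 2 * P * H\<^sup>2"])
    fix \<delta> x :: real assume "0 < \<delta>" and x: "x \<in> {a..b}"
    define w where "w = cutoff_density y \<delta>"
    show "\<bar>fpp0 x * (h x)\<^sup>2 * (dv a b (cutoff y \<delta>) x)\<^sup>2\<bar> \<le> 3 / 2 * P * H\<^sup>2 * \<delta> * cutoff_density y \<delta> x"
    proof (cases "y - \<delta> < x \<and> x < y")
      case True
      have "0 \<le> H"
        using H x abs_ge_zero[of "dv a b h x"] by fastforce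
      have "\<bar>h x\<bar> \<le> H * \<bar>x - y\<bar>"
        using C1_on_abs_diff_le[OF h_C1 H x assms(1)] assms(2) by simp
      also have "\<dots> \<le> H * \<delta>"
        using True \<open>0 \<le> H\<close> by (intro mult_left_mono) auto
      finally have "(h x)\<^sup>2 \<le> (H * \<delta>)\<^sup>2"
        using power_mono[OF _ abs_ge_zero, of "h x" "H * \<delta>" 2] by simp
      moreover have "w x \<le> 3 / (2 * \<delta>)" "0 \<le> w x" "\<bar>fpp0 x\<bar> \<le> P"
        using cutoff_density_bounds[OF \<open>0 < \<delta>\<close>] P x by (auto simp: w_def)
      ultimately have "\<bar>fpp0 x\<bar> * (h x)\<^sup>2 * (w x * w x) \<le> P * (H * \<delta>)\<^sup>2 * (w x * (3 / (2 * \<delta>)))"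
        by (intro mult_mono) auto
      then show ?thesis
        using \<open>0 < \<delta>\<close> dv_cutoff[OF ab \<open>0 < \<delta>\<close> x]
        by (simp add: w_def abs_mult power2_eq_square field_simps)
    next
      case False
      then show ?thesis
        using cutoff_density_eq_0[OF \<open>0 < \<delta>\<close>] cutoff_density_bounds[OF \<open>0 < \<delta>\<close>]
          dv_cutoff[OF ab \<open>0 < \<delta>\<close> x] by (auto simp: not_less)
    qed
  qed
qed

lemma picone_energy_cutoff_le:
  assumes "y \<in> {a..b}" "h y = 0"
  obtains C where "\<And>\<delta>. 0 < \<delta> \<Longrightarrow> a \<le> y - \<delta> \<Longrightarrow>
    \<bar>integral {a..b} (\<lambda>x. fpp0 x * (h x)\<^sup>2 * (dv a b (cutoff y \<delta>) x)\<^sup>2)\<bar> \<le> C * \<delta>"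
proof -
  obtain C where C: "\<And>\<delta> x. 0 < \<delta> \<Longrightarrow> x \<in> {a..b} \<Longrightarrow>
      \<bar>fpp0 x * (h x)\<^sup>2 * (dv a b (cutoff y \<delta>) x)\<^sup>2\<bar> \<le> C * \<delta> * cutoff_density y \<delta> x"
    using picone_density_cutoff_le[OF assms] by blast
  show ?thesis
  proof (rule that)
    fix \<delta> :: real assume "0 < \<delta>" "a \<le> y - \<delta>"
    then have w: "(cutoff_density y \<delta> has_integral 1) {a..b}"
      using has_integral_cutoff_density assms(1) by auto
    have "norm (integral {a..b} (\<lambda>x. fpp0 x * (h x)\<^sup>2 * (dv a b (cutoff y \<delta>) x)\<^sup>2))
        \<le> integral {a..b} (\<lambda>x. C * \<delta> * cutoff_density y \<delta> x)"
    proof (rule integral_norm_bound_integral)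
      show "(\<lambda>x. fpp0 x * (h x)\<^sup>2 * (dv a b (cutoff y \<delta>) x)\<^sup>2) integrable_on {a..b}"
        using continuous_on_coefficients(6) C1_on_continuous[OF h_C1]
          C1_on_continuous_dv[OF C1_on_cutoff[OF ab \<open>0 < \<delta>\<close>]]
        by (intro integrable_continuous_interval continuous_intros)
      show "(\<lambda>x. C * \<delta> * cutoff_density y \<delta> x) integrable_on {a..b}"
        using w by (intro integrable_on_mult_right) (rule has_integral_integrable)
    qed (use C \<open>0 < \<delta>\<close> in simp)
    then show "\<bar>integral {a..b} (\<lambda>x. fpp0 x * (h x)\<^sup>2 * (dv a b (cutoff y \<delta>) x)\<^sup>2)\<bar> \<le> C * \<delta>"
      using integral_unique[OF w] by simp
  qed
qed

lemma second_variation_cutoff: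
  assumes "0 < \<delta>" "y \<le> b"
  shows "second_variation a b f u0 (\<lambda>x. h x * cutoff y \<delta> x + s)
    = integral {a..b} (\<lambda>x. fpp0 x * (h x)\<^sup>2 * (dv a b (cutoff y \<delta>) x)\<^sup>2)
      + 2 * s * integral {a..b} (\<lambda>x. cutoff_density y \<delta> x * (fpp0 x * dv a b h x))
      + s\<^sup>2 * integral {a..b} fuu0"
proof -
  have \<zeta>: "C1_on a b (cutoff y \<delta>)"
    using C1_on_cutoff[OF ab assms(1)] .
  have "integral {a..b} (\<lambda>x. dv a b (cutoff y \<delta>) x * fpp0 x * dv a b h x)
      = - integral {a..b} (\<lambda>x. cutoff_density y \<delta> x * (fpp0 x * dv a b h x))"
    unfolding integral_neg[symmetric] by (rule integral_cong) (simp add: dv_cutoff[OF ab assms(1)])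
  then show ?thesis
    using second_variation_picone[OF \<zeta> C1_on_add[OF ab C1_on_mult[OF ab h_C1 \<zeta>] C1_on_const[OF ab]],
        where s = s]
      cutoff_eq_0[OF assms]
    by simp
qed

text \<open>The cutoff density concentrates at \<open>y\<close>, where \<open>fpp0 y * h'(y) = Bh y\<close> since \<open>h y = 0\<close>.\<close>

lemma second_variation_cutoff_approx:
  assumes y: "a < y" "y \<le> b" "h y = 0" and "\<epsilon> > 0"
  obtains \<eta> where "C1_on a b \<eta>"
    "\<bar>second_variation a b f u0 \<eta> - (2 * s * Bh y + s\<^sup>2 * integral {a..b} fuu0)\<bar> \<le> \<epsilon>"
proof -
  have "y \<in> {a..b}" using y by simp
  define k where "k x = fpp0 x * dv a b h x" for x
  have "k y = Bh y"
    using y by (simp add: k_def Bop_def)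
  have "continuous_on {a..b} k"
    unfolding k_def using continuous_on_coefficients(6) C1_on_continuous_dv[OF h_C1]
    by (intro continuous_intros)
  obtain C where C: "\<And>\<delta>. 0 < \<delta> \<Longrightarrow> a \<le> y - \<delta> \<Longrightarrow>
      \<bar>integral {a..b} (\<lambda>x. fpp0 x * (h x)\<^sup>2 * (dv a b (cutoff y \<delta>) x)\<^sup>2)\<bar> \<le> C * \<delta>"
    using picone_energy_cutoff_le[OF \<open>y \<in> {a..b}\<close> y(3)] by blast
  define \<epsilon>' where "\<epsilon>' = \<epsilon> / (4 * (\<bar>s\<bar> + 1))"
  have "\<epsilon>' > 0" "2 * \<bar>s\<bar> * \<epsilon>' \<le> \<epsilon> / 2"
    using \<open>\<epsilon> > 0\<close> by (simp_all add: \<epsilon>'_def field_simps)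
  obtain d where "d > 0" and d: "\<And>\<delta>. 0 < \<delta> \<Longrightarrow> \<delta> \<le> d \<Longrightarrow> a \<le> y - \<delta> \<Longrightarrow>
      \<bar>integral {a..b} (\<lambda>x. cutoff_density y \<delta> x * k x) - k y\<bar> \<le> \<epsilon>'"
    using cutoff_average_dist_le[OF \<open>continuous_on {a..b} k\<close> \<open>y \<in> {a..b}\<close> \<open>\<epsilon>' > 0\<close>] by blast
  define \<delta> where "\<delta> = min (y - a) (min d (\<epsilon> / (2 * (\<bar>C\<bar> + 1))))"
  have "0 < \<delta>" "a \<le> y - \<delta>" "\<delta> \<le> d" "\<delta> \<le> \<epsilon> / (2 * (\<bar>C\<bar> + 1))"
    using y \<open>d > 0\<close> \<open>\<epsilon> > 0\<close> by (auto simp: \<delta>_def)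
  moreover have "0 < 2 * (\<bar>C\<bar> + 1)"
    by (simp add: add_nonneg_pos)
  ultimately have "\<delta> * (2 * (\<bar>C\<bar> + 1)) \<le> \<epsilon>"
    by (simp add: pos_le_divide_eq)
  then have "\<bar>C\<bar> * \<delta> \<le> \<epsilon> / 2"
    using \<open>0 < \<delta>\<close> by (simp add: algebra_simps)
  define I where "I = integral {a..b} (\<lambda>x. fpp0 x * (h x)\<^sup>2 * (dv a b (cutoff y \<delta>) x)\<^sup>2)"
  define T where "T = integral {a..b} (\<lambda>x. cutoff_density y \<delta> x * k x)"
  have "\<bar>I\<bar> \<le> \<bar>C\<bar> * \<delta>"
    using C[OF \<open>0 < \<delta>\<close> \<open>a \<le> y - \<delta>\<close>] mult_right_mono[OF abs_ge_self[of C] less_imp_le[OF \<open>0 < \<delta>\<close>]]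
    unfolding I_def by linarith
  moreover have "\<bar>2 * s * (T - k y)\<bar> \<le> 2 * \<bar>s\<bar> * \<epsilon>'"
    using d[OF \<open>0 < \<delta>\<close> \<open>\<delta> \<le> d\<close> \<open>a \<le> y - \<delta>\<close>]
    by (simp add: T_def abs_mult mult_left_mono)
  moreover have "second_variation a b f u0 (\<lambda>x. h x * cutoff y \<delta> x + s)
      - (2 * s * Bh y + s\<^sup>2 * integral {a..b} fuu0) = I + 2 * s * (T - k y)"
    using second_variation_cutoff[OF \<open>0 < \<delta>\<close> y(2), of s] \<open>k y = Bh y\<close>
    by (simp add: I_def T_def k_def algebra_simps)
  ultimately have "\<bar>second_variation a b f u0 (\<lambda>x. h x * cutoff y \<delta> x + s)
      - (2 * s * Bh y + s\<^sup>2 * integral {a..b} fuu0)\<bar> \<le> \<epsilon>"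
    using \<open>\<bar>C\<bar> * \<delta> \<le> \<epsilon> / 2\<close> \<open>2 * \<bar>s\<bar> * \<epsilon>' \<le> \<epsilon> / 2\<close> abs_triangle_ineq[of I "2 * s * (T - k y)"]
    by linarith
  moreover have "C1_on a b (\<lambda>x. h x * cutoff y \<delta> x + s)"
    by (rule C1_on_add[OF ab C1_on_mult[OF ab h_C1 C1_on_cutoff[OF ab \<open>0 < \<delta>\<close>]] C1_on_const[OF ab]])
  ultimately show ?thesis
    using that by blast
qed

text \<open>\<open>Bh y \<noteq> 0\<close> by uniqueness, so \<open>2 s Bh y + s\<^sup>2 \<integral> fuu0 < 0\<close> for \<open>s = - t Bh y\<close>
  with \<open>t > 0\<close> small.\<close>

lemma second_variation_neg_if_zero:
  assumes y: "a < y" "y \<le> b" "h y = 0"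
  obtains \<eta> where "C1_on a b \<eta>" "second_variation a b f u0 \<eta> < 0"
proof -
  have "Bh y \<noteq> 0"
    using jacobi_zero_data_imp_zero[of y] y nontrivial by auto
  define Q where "Q = integral {a..b} fuu0"
  define t where "t = 1 / (1 + \<bar>Q\<bar>)"
  have "t > 0" "t * \<bar>Q\<bar> \<le> 1"
    by (simp_all add: t_def field_simps)
  then have "t * (Bh y)\<^sup>2 > 0"
    using \<open>Bh y \<noteq> 0\<close> by simp
  then obtain \<eta> where "C1_on a b \<eta>" and approx:
    "\<bar>second_variation a b f u0 \<eta> - (2 * (- t * Bh y) * Bh y + (- t * Bh y)\<^sup>2 * Q)\<bar> \<le> t * (Bh y)\<^sup>2 / 2"
    using second_variation_cutoff_approx[OF y, of "t * (Bh y)\<^sup>2 / 2" "- t * Bh y"] by (auto simp: Q_def)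
  have "t * Q \<le> 1"
    using \<open>t * \<bar>Q\<bar> \<le> 1\<close> mult_left_mono[OF abs_ge_self[of Q], of t] \<open>t > 0\<close> by linarith
  then have "(t * (Bh y)\<^sup>2) * (t * Q) \<le> t * (Bh y)\<^sup>2"
    using mult_left_mono[of "t * Q" 1 "t * (Bh y)\<^sup>2"] \<open>t * (Bh y)\<^sup>2 > 0\<close> by simp
  moreover have "2 * (- t * Bh y) * Bh y + (- t * Bh y)\<^sup>2 * Q = - 2 * (t * (Bh y)\<^sup>2) + (t * (Bh y)\<^sup>2) * (t * Q)"
    by (simp add: power2_eq_square algebra_simps)
  ultimately have "second_variation a b f u0 \<eta> < 0"
    using approx \<open>t * (Bh y)\<^sup>2 > 0\<close> by linarith
  with \<open>C1_on a b \<eta>\<close> show ?thesis by (rule that)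
qed

lemma second_variation_neg:
  assumes "(\<exists>y\<in>{a<..b}. h y = 0) \<or> Bh b * h b < 0"
  obtains \<eta> where "C1_on a b \<eta>" "second_variation a b f u0 \<eta> < 0"
proof (cases "\<exists>y\<in>{a<..b}. h y = 0")
  case True
  then obtain y where "a < y" "y \<le> b" "h y = 0"
    by auto
  then show ?thesis
    using second_variation_neg_if_zero that by blast
next
  case False
  then have "second_variation a b f u0 h < 0"
    using assms second_variation_jacobi_field by (simp add: mult.commute)
  with h_C1 show ?thesis by (rule that)
qed

end

theorem theorem3p3:
  fixes a b c0 :: real and f :: "real \<Rightarrow> real \<Rightarrow> real \<Rightarrow> real" and u0 h :: "real \<Rightarrow> real"
  assumes ab: "a < b"
    and fC3: "C3_strip a b f"
    and u0C1: "C1_on a b u0"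
    and extremal: "\<forall>x\<in>{a..b}. (along a b (D3 f) u0 has_real_derivative along a b (D2 f) u0 x) (at x within {a..b})"
    and nat_a: "along a b (D3 f) u0 a = 0"
    and nat_b: "along a b (D3 f) u0 b = 0"
    and c0: "c0 > 0" "\<forall>x\<in>{a..b}. along a b (D3 (D3 f)) u0 x \<ge> c0"
    and jac: "jacobi_solution a b f u0 h"
    and nontriv: "\<exists>x\<in>{a..b}. h x \<noteq> 0"
    and Ba: "Bop a b f u0 h a = 0"
  shows "(((\<exists>y\<in>{a<..b}. h y = 0) \<or> Bop a b f u0 h b * h b < 0) \<longrightarrow> \<not> weak_minimizer a b f u0)
       \<and> (((\<forall>y\<in>{a<..b}. h y \<noteq> 0) \<and> Bop a b f u0 h b * h b > 0) \<longrightarrow> strict_weak_minimizer a b f u0)"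
proof -
  obtain U where "open U" "{a..b} \<times> UNIV \<times> UNIV \<subseteq> U" "Ck_on 3 U f"
    using fC3 unfolding C3_strip_def by blast
  then interpret natural_extremal a b f u0 U
    using ab u0C1 extremal nat_a nat_b by unfold_locales auto
  interpret jacobi_field a b f u0 U h c0
    using c0 jac nontriv Ba by unfold_locales auto
  show ?thesis
  proof (intro conjI impI)
    assume "(\<exists>y\<in>{a<..b}. h y = 0) \<or> Bop a b f u0 h b * h b < 0"
    then obtain \<eta> where "C1_on a b \<eta>" "second_variation a b f u0 \<eta> < 0"
      by (rule second_variation_neg)
    then show "\<not> weak_minimizer a b f u0"
      by (rule not_weak_minimizer_if_second_variation_neg)
  next
    assume "(\<forall>y\<in>{a<..b}. h y \<noteq> 0) \<and> Bop a b f u0 h b * h b > 0"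
    then obtain \<kappa> where "\<kappa> > 0"
      "\<And>\<eta>. C1_on a b \<eta> \<Longrightarrow> \<kappa> * H1_norm_sq a b \<eta> \<le> second_variation a b f u0 \<eta>"
      using second_variation_coercive jacobi_nonvanishing by blast
    then show "strict_weak_minimizer a b f u0"
      by (rule strict_weak_minimizer_if_coercive)
  qed
qed

end
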